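(* Let $n\ge 1$ and let $\theta=(\theta^{ij})$ and $\theta'=(\theta'^{ij})$ be arbitrary real antisymmetric $n\times n$ matrices. Then the differential graded algebras $(A_\theta,d)$ and $(A_{\theta'},d)$ are quasi-isomorphic.
   Context: For a real antisymmetric $n\times n$ matrix $\theta$, $A_\theta$ denotes the unital associative graded algebra over $\mathbb{R}$ generated by elements $x^1,\dots,x^n$ of degree $0$ and $\xi^1,\dots,\xi^n$ of degree $1$ subject to the relations $x^ix^j-x^jx^i=\theta^{ij}$ (times the unit), $x^i\xi^j-\xi^jx^i=0$, $\xi^i\xi^j=0$ for all $i,j$. It carries the differential $d$ of degree $+1$ determined by $dx^i=\xi^i$, $d\xi^i=0$ and the graded Leibniz rule. Two dg-algebras $A,B$ are called quasi-isomorphic if there is a zig-zag $A\leftarrow C_1\rightarrow C_2\leftarrow\cdots\leftarrow C_m\rightarrow B$ of dg-algebra morphisms each of which induces an isomorphism in cohomology. *)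

theory Defs
  imports Complex_Main
begin

record 'a dga =
  dg_carrier :: "'a set"
  dg_hom     :: "int \<Rightarrow> 'a set"     (* homogeneous component of degree k *)
  dg_add     :: "'a \<Rightarrow> 'a \<Rightarrow> 'a"
  dg_zero    :: 'a
  dg_smult   :: "real \<Rightarrow> 'a \<Rightarrow> 'a"
  dg_mult    :: "'a \<Rightarrow> 'a \<Rightarrow> 'a"
  dg_one     :: 'a
  dg_diff    :: "'a \<Rightarrow> 'a"

definition dg_sum :: "'a dga \<Rightarrow> (int \<Rightarrow> 'a) \<Rightarrow> 'a" where
  "dg_sum A c = foldr (\<lambda>k acc. dg_add A (c k) acc)
      (sorted_list_of_set {k. c k \<noteq> dg_zero A}) (dg_zero A)"

definition dga :: "'a dga \<Rightarrow> bool" where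
  "dga A \<longleftrightarrow>
   (let C = dg_carrier A; pl = dg_add A; z = dg_zero A; sm = dg_smult A;
        mu = dg_mult A; u = dg_one A; d = dg_diff A; H = dg_hom A in
    \<comment> \<open>closure\<close>
    z \<in> C \<and> u \<in> C \<and>
    (\<forall>x\<in>C. \<forall>y\<in>C. pl x y \<in> C \<and> mu x y \<in> C) \<and>
    (\<forall>a. \<forall>x\<in>C. sm a x \<in> C) \<and> (\<forall>x\<in>C. d x \<in> C) \<and>
    \<comment> \<open>real vector space\<close>
    (\<forall>x\<in>C. \<forall>y\<in>C. \<forall>w\<in>C. pl (pl x y) w = pl x (pl y w)) \<and>
    (\<forall>x\<in>C. \<forall>y\<in>C. pl x y = pl y x) \<and>
    (\<forall>x\<in>C. pl z x = x) \<and>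
    (\<forall>x\<in>C. \<exists>y\<in>C. pl x y = z) \<and>
    (\<forall>a b. \<forall>x\<in>C. sm a (sm b x) = sm (a * b) x) \<and>
    (\<forall>x\<in>C. sm 1 x = x) \<and>
    (\<forall>a. \<forall>x\<in>C. \<forall>y\<in>C. sm a (pl x y) = pl (sm a x) (sm a y)) \<and>
    (\<forall>a b. \<forall>x\<in>C. sm (a + b) x = pl (sm a x) (sm b x)) \<and>
    \<comment> \<open>unital associative algebra\<close>
    (\<forall>x\<in>C. \<forall>y\<in>C. \<forall>w\<in>C. mu (mu x y) w = mu x (mu y w)) \<and>
    (\<forall>x\<in>C. mu u x = x \<and> mu x u = x) \<and>
    (\<forall>x\<in>C. \<forall>y\<in>C. \<forall>w\<in>C. mu x (pl y w) = pl (mu x y) (mu x w)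
                        \<and> mu (pl y w) x = pl (mu y x) (mu w x)) \<and>
    (\<forall>a. \<forall>x\<in>C. \<forall>y\<in>C. sm a (mu x y) = mu (sm a x) y \<and> sm a (mu x y) = mu x (sm a y)) \<and>
    \<comment> \<open>grading: direct sum of subspaces, compatible with product and unit\<close>
    (\<forall>k. H k \<subseteq> C \<and> z \<in> H k \<and> (\<forall>x\<in>H k. \<forall>y\<in>H k. pl x y \<in> H k)
         \<and> (\<forall>a. \<forall>x\<in>H k. sm a x \<in> H k)) \<and>
    (\<forall>x\<in>C. \<exists>!c. (\<forall>k. c k \<in> H k) \<and> finite {k. c k \<noteq> z} \<and> x = dg_sum A c) \<and>
    (\<forall>k l. \<forall>x\<in>H k. \<forall>y\<in>H l. mu x y \<in> H (k + l)) \<and> u \<in> H 0 \<and>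
    \<comment> \<open>differential of degree +1, square zero, graded Leibniz rule\<close>
    (\<forall>x\<in>C. \<forall>y\<in>C. d (pl x y) = pl (d x) (d y)) \<and>
    (\<forall>a. \<forall>x\<in>C. d (sm a x) = sm a (d x)) \<and>
    (\<forall>k. \<forall>x\<in>H k. d x \<in> H (k + 1)) \<and>
    (\<forall>x\<in>C. d (d x) = z) \<and>
    (\<forall>k. \<forall>x\<in>H k. \<forall>y\<in>C.
        d (mu x y) = pl (mu (d x) y) (sm (if even k then 1 else -1) (mu x (d y)))))"

definition dga_morphism :: "'a dga \<Rightarrow> 'b dga \<Rightarrow> ('a \<Rightarrow> 'b) \<Rightarrow> bool" where
  "dga_morphism A B f \<longleftrightarrow> dga A \<and> dga B \<and>
    (\<forall>x\<in>dg_carrier A. f x \<in> dg_carrier B) \<and>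
    (\<forall>x\<in>dg_carrier A. \<forall>y\<in>dg_carrier A. f (dg_add A x y) = dg_add B (f x) (f y)) \<and>
    (\<forall>a. \<forall>x\<in>dg_carrier A. f (dg_smult A a x) = dg_smult B a (f x)) \<and>
    (\<forall>x\<in>dg_carrier A. \<forall>y\<in>dg_carrier A. f (dg_mult A x y) = dg_mult B (f x) (f y)) \<and>
    f (dg_one A) = dg_one B \<and>
    (\<forall>k. \<forall>x\<in>dg_hom A k. f x \<in> dg_hom B k) \<and>
    (\<forall>x\<in>dg_carrier A. f (dg_diff A x) = dg_diff B (f x))"

text \<open>The map induced on $H^k = (\ker d \cap A^k) / d(A^{k-1})$ is bijective for every k
  (surjectivity and injectivity written out).\<close>
definition quasi_isomorphism :: "'a dga \<Rightarrow> 'b dga \<Rightarrow> ('a \<Rightarrow> 'b) \<Rightarrow> bool" where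
  "quasi_isomorphism A B f \<longleftrightarrow> dga_morphism A B f \<and>
    (\<forall>k. (\<forall>z'\<in>dg_hom B k. dg_diff B z' = dg_zero B \<longrightarrow>
            (\<exists>z\<in>dg_hom A k. dg_diff A z = dg_zero A \<and>
               (\<exists>b\<in>dg_hom B (k - 1). dg_add B (f z) (dg_diff B b) = z'))) \<and>
         (\<forall>z\<in>dg_hom A k. dg_diff A z = dg_zero A \<and>
               (\<exists>b\<in>dg_hom B (k - 1). f z = dg_diff B b) \<longrightarrow>
            (\<exists>a\<in>dg_hom A (k - 1). z = dg_diff A a)))"

definition qiso_from :: "'a dga \<Rightarrow> 'a dga \<Rightarrow> bool" where
  "qiso_from A B \<longleftrightarrow> (\<exists>f. quasi_isomorphism A B f)"

text \<open>Zig-zag  A <- C_1 -> C_2 <- ... <- C_m -> B  (m odd), all of quasi-isomorphisms.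
  With D = A # Cs @ [B], for even j the arrow goes D_(j+1) -> D_j, for odd j D_j -> D_(j+1).\<close>
definition quasi_isomorphic :: "'a dga \<Rightarrow> 'a dga \<Rightarrow> bool" where
  "quasi_isomorphic A B \<longleftrightarrow>
    (\<exists>Cs. odd (length Cs) \<and>
       (let D = A # Cs @ [B] in
        \<forall>j\<le>length Cs. (if even j then qiso_from (D ! (j + 1)) (D ! j)
                                 else qiso_from (D ! j) (D ! (j + 1)))))"

datatype gen = Xg nat | Eg nat   (* Xg i = x^(i+1), Eg i = xi^(i+1), i < n *)

definition gens :: "nat \<Rightarrow> gen set" where
  "gens n = {Xg i | i. i < n} \<union> {Eg i | i. i < n}"

definition FA :: "nat \<Rightarrow> (gen list \<Rightarrow> real) set" where
  "FA n = {f. finite {w. f w \<noteq> 0} \<and> (\<forall>w. f w \<noteq> 0 \<longrightarrow> set w \<subseteq> gens n)}"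

definition fa_add :: "(gen list \<Rightarrow> real) \<Rightarrow> (gen list \<Rightarrow> real) \<Rightarrow> (gen list \<Rightarrow> real)" where
  "fa_add f g = (\<lambda>w. f w + g w)"
definition fa_smult :: "real \<Rightarrow> (gen list \<Rightarrow> real) \<Rightarrow> (gen list \<Rightarrow> real)" where
  "fa_smult c f = (\<lambda>w. c * f w)"
definition fa_sub :: "(gen list \<Rightarrow> real) \<Rightarrow> (gen list \<Rightarrow> real) \<Rightarrow> (gen list \<Rightarrow> real)" where
  "fa_sub f g = (\<lambda>w. f w - g w)"
definition fa_zero :: "gen list \<Rightarrow> real" where
  "fa_zero = (\<lambda>w. 0)"
definition fa_one :: "gen list \<Rightarrow> real" where
  "fa_one = (\<lambda>w. if w = [] then 1 else 0)"
definition fa_gen :: "gen \<Rightarrow> gen list \<Rightarrow> real" where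
  "fa_gen a = (\<lambda>w. if w = [a] then 1 else 0)"
definition fa_mult :: "(gen list \<Rightarrow> real) \<Rightarrow> (gen list \<Rightarrow> real) \<Rightarrow> (gen list \<Rightarrow> real)" where
  "fa_mult f g = (\<lambda>w. \<Sum>k\<in>{0..length w}. f (take k w) * g (drop k w))"

definition A_rels :: "nat \<Rightarrow> (nat \<Rightarrow> nat \<Rightarrow> real) \<Rightarrow> (gen list \<Rightarrow> real) set" where
  "A_rels n \<theta> =
     {fa_sub (fa_sub (fa_mult (fa_gen (Xg i)) (fa_gen (Xg j))) (fa_mult (fa_gen (Xg j)) (fa_gen (Xg i))))
             (fa_smult (\<theta> i j) fa_one) | i j. i < n \<and> j < n}
   \<union> {fa_sub (fa_mult (fa_gen (Xg i)) (fa_gen (Eg j))) (fa_mult (fa_gen (Eg j)) (fa_gen (Xg i)))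
       | i j. i < n \<and> j < n}
   \<union> {fa_mult (fa_gen (Eg i)) (fa_gen (Eg j)) | i j. i < n \<and> j < n}"

inductive_set A_ideal :: "nat \<Rightarrow> (nat \<Rightarrow> nat \<Rightarrow> real) \<Rightarrow> (gen list \<Rightarrow> real) set"
  for n \<theta> where
  rel: "r \<in> A_rels n \<theta> \<Longrightarrow> r \<in> A_ideal n \<theta>"
| zero: "fa_zero \<in> A_ideal n \<theta>"
| add: "f \<in> A_ideal n \<theta> \<Longrightarrow> g \<in> A_ideal n \<theta> \<Longrightarrow> fa_add f g \<in> A_ideal n \<theta>"
| smult: "f \<in> A_ideal n \<theta> \<Longrightarrow> fa_smult c f \<in> A_ideal n \<theta>"
| lmult: "f \<in> A_ideal n \<theta> \<Longrightarrow> a \<in> FA n \<Longrightarrow> fa_mult a f \<in> A_ideal n \<theta>"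
| rmult: "f \<in> A_ideal n \<theta> \<Longrightarrow> a \<in> FA n \<Longrightarrow> fa_mult f a \<in> A_ideal n \<theta>"

definition A_cls :: "nat \<Rightarrow> (nat \<Rightarrow> nat \<Rightarrow> real) \<Rightarrow> (gen list \<Rightarrow> real) \<Rightarrow> (gen list \<Rightarrow> real) set" where
  "A_cls n \<theta> f = {g \<in> FA n. fa_sub f g \<in> A_ideal n \<theta>}"

definition A_rep :: "(gen list \<Rightarrow> real) set \<Rightarrow> (gen list \<Rightarrow> real)" where
  "A_rep P = (SOME f. f \<in> P)"

fun is_xi :: "gen \<Rightarrow> bool" where
  "is_xi (Xg i) = False"
| "is_xi (Eg i) = True"

definition word_deg :: "gen list \<Rightarrow> nat" where
  "word_deg w = length (filter is_xi w)"

definition fa_homog :: "int \<Rightarrow> (gen list \<Rightarrow> real) \<Rightarrow> bool" where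
  "fa_homog k f \<longleftrightarrow> (\<forall>w. f w \<noteq> 0 \<longrightarrow> int (word_deg w) = k)"

text \<open>Graded derivation of the free algebra with d x^i = xi^i, d xi^i = 0:
  d(u x^i v) contributes (-1)^(deg u) u xi^i v.\<close>
definition fa_d :: "(gen list \<Rightarrow> real) \<Rightarrow> (gen list \<Rightarrow> real)" where
  "fa_d f = (\<lambda>w. \<Sum>p<length w. (case w ! p of
       Eg i \<Rightarrow> (if even (word_deg (take p w)) then 1 else -1) * f (w[p := Xg i])
     | Xg i \<Rightarrow> 0))"

definition A_theta :: "nat \<Rightarrow> (nat \<Rightarrow> nat \<Rightarrow> real) \<Rightarrow> (gen list \<Rightarrow> real) set dga" where
  "A_theta n \<theta> =
    \<lparr> dg_carrier = {A_cls n \<theta> f | f. f \<in> FA n},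
      dg_hom = (\<lambda>k. {A_cls n \<theta> f | f. f \<in> FA n \<and> fa_homog k f}),
      dg_add = (\<lambda>P Q. A_cls n \<theta> (fa_add (A_rep P) (A_rep Q))),
      dg_zero = A_cls n \<theta> fa_zero,
      dg_smult = (\<lambda>c P. A_cls n \<theta> (fa_smult c (A_rep P))),
      dg_mult = (\<lambda>P Q. A_cls n \<theta> (fa_mult (A_rep P) (A_rep Q))),
      dg_one = A_cls n \<theta> fa_one,
      dg_diff = (\<lambda>P. A_cls n \<theta> (fa_d (A_rep P))) \<rparr>"

definition antisymmetric_matrix :: "nat \<Rightarrow> (nat \<Rightarrow> nat \<Rightarrow> real) \<Rightarrow> bool" where
  "antisymmetric_matrix n \<theta> \<longleftrightarrow> (\<forall>i<n. \<forall>j<n. \<theta> i j = - \<theta> j i)"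

end

theory Submission
  imports Defs
begin

text \<open>
  The relations of A\<theta> allow every word to be rewritten as a combination of ordered words
  (x^0)^a0 ... (x^(n-1))^a(n-1), optionally followed by a single xi^i. Letting the free
  algebra act on the space of such symbols, x^i by x_i + (sum over j < i of theta^ij d/dx_j) and
  xi^i by multiplication, shows that the ordered words are linearly independent in A\<theta>: the
  symbol map a \<mapsto> a.1 is a linear isomorphism from A\<theta> onto the space of polynomial
  differential forms of degree at most 1, and it turns d into the de Rham differential, which
  does not depend on theta.

  Hence the cohomology is R in degree 0 and Omega^1/dOmega^0 in degree 1 for every theta. Fix a
  complement V of the exact 1-forms (those forms whose coefficient of xi^i only involves
  monomials containing some x_j with j < i). The elements of A\<theta> with symbol in R + V form a
  sub-dga B\<theta> with zero differential whose inclusion is a quasi-isomorphism, and transporting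
  symbols from theta to theta' maps B\<theta> multiplicatively into A\<theta>', because in B\<theta> the only
  nonzero products involve a scalar. The zig-zag A\<theta> <- B\<theta> -> A\<theta>' proves the theorem.
\<close>

section \<open>Symbols and the operators of the generators\<close>

text \<open>A monomial is an exponent vector of the x's together with at most one xi; a symbol is a
  real coefficient function on monomials.\<close>

type_synonym monomial = "(nat \<Rightarrow> nat) \<times> nat option"
type_synonym pol = "monomial \<Rightarrow> real"

definition mult_x :: "nat \<Rightarrow> pol \<Rightarrow> pol" where
  "mult_x i p = (\<lambda>(a,s). if a i = 0 then 0 else p (a(i := a i - 1), s))"

definition deriv_x :: "nat \<Rightarrow> pol \<Rightarrow> pol" where
  "deriv_x j p = (\<lambda>(a,s). real (a j + 1) * p (a(j := a j + 1), s))"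

text \<open>Left multiplication by x^i in the ordered basis: moving x^i past x^j with j < i
  produces the correction theta^ij, whence the derivative terms.\<close>

definition star_x :: "(nat \<Rightarrow> nat \<Rightarrow> real) \<Rightarrow> nat \<Rightarrow> pol \<Rightarrow> pol" where
  "star_x \<theta> i p = (\<lambda>m. mult_x i p m + (\<Sum>j<i. \<theta> i j * deriv_x j p m))"

definition mult_xi :: "nat \<Rightarrow> pol \<Rightarrow> pol" where
  "mult_xi i p = (\<lambda>(a,s). if s = Some i then p (a, None) else 0)"

definition pol_d :: "pol \<Rightarrow> pol" where
  "pol_d p = (\<lambda>(a,s). case s of None \<Rightarrow> 0 | Some i \<Rightarrow> deriv_x i p (a, None))"

lemma mult_x_apply: "mult_x i p (a,s) = (if a i = 0 then 0 else p (a(i := a i - 1), s))"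
  by (simp add: mult_x_def)

lemma deriv_x_apply: "deriv_x j p (a,s) = real (a j + 1) * p (a(j := a j + 1), s)"
  by (simp add: deriv_x_def)

lemma mult_xi_apply: "mult_xi i p (a,s) = (if s = Some i then p (a, None) else 0)"
  by (simp add: mult_xi_def)

lemma pol_d_apply: "pol_d p (a,s) = (case s of None \<Rightarrow> 0 | Some i \<Rightarrow> deriv_x i p (a, None))"
  by (simp add: pol_d_def)

definition linear_op :: "(pol \<Rightarrow> pol) \<Rightarrow> bool" where
  "linear_op T \<longleftrightarrow> (\<forall>p q. T (\<lambda>m. p m + q m) = (\<lambda>m. T p m + T q m)) \<and>
              (\<forall>c p. T (\<lambda>m. c * p m) = (\<lambda>m. c * T p m))"

lemma linear_op_add: "linear_op T \<Longrightarrow> T (\<lambda>m. p m + q m) = (\<lambda>m. T p m + T q m)"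
  by (simp add: linear_op_def)

lemma linear_op_smult: "linear_op T \<Longrightarrow> T (\<lambda>m. c * p m) = (\<lambda>m. c * T p m)"
  by (simp add: linear_op_def)

lemma linear_op_zero: "linear_op T \<Longrightarrow> T (\<lambda>m. 0) = (\<lambda>m. 0)"
  using linear_op_smult[of T 0 "\<lambda>m. 0"] by simp

lemma linear_op_sum: "linear_op T \<Longrightarrow> T (\<lambda>m. \<Sum>k\<in>K. F k m) = (\<lambda>m. \<Sum>k\<in>K. T (F k) m)"
proof (induction K rule: infinite_finite_induct)
  case (insert x K)
  then show ?case using linear_op_add[of T "F x" "\<lambda>m. \<Sum>k\<in>K. F k m"] by simp
qed (simp_all add: linear_op_zero)

lemma linear_op_comp: "linear_op S \<Longrightarrow> linear_op T \<Longrightarrow> linear_op (\<lambda>p. S (T p))"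
  by (simp add: linear_op_def)

lemma linear_op_mult_x: "linear_op (mult_x i)"
  unfolding linear_op_def by (auto simp: mult_x_def fun_eq_iff)

lemma linear_op_deriv_x: "linear_op (deriv_x i)"
  unfolding linear_op_def by (auto simp: deriv_x_def fun_eq_iff algebra_simps)

lemma linear_op_mult_xi: "linear_op (mult_xi i)"
  unfolding linear_op_def by (auto simp: mult_xi_def fun_eq_iff)

lemma linear_op_pol_d: "linear_op pol_d"
  unfolding linear_op_def
  by (auto simp: pol_d_def deriv_x_def fun_eq_iff algebra_simps split: option.splits)

lemma linear_op_star_x: "linear_op (star_x \<theta> i)"
  unfolding linear_op_def star_x_def
  by (auto simp: linear_op_add[OF linear_op_mult_x] linear_op_add[OF linear_op_deriv_x]
      linear_op_smult[OF linear_op_mult_x] linear_op_smult[OF linear_op_deriv_x]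
      fun_eq_iff algebra_simps sum.distrib sum_distrib_left)

lemma mult_x_commute: "mult_x i (mult_x j p) = mult_x j (mult_x i p)"
  by (cases "i = j") (auto simp: mult_x_def fun_eq_iff fun_upd_twist)

lemma deriv_x_commute: "deriv_x i (deriv_x j p) = deriv_x j (deriv_x i p)"
  by (cases "i = j") (auto simp: deriv_x_def fun_eq_iff fun_upd_twist)

lemma deriv_x_mult_x:
  "deriv_x k (mult_x i p) = (\<lambda>m. mult_x i (deriv_x k p) m + (if k = i then p m else 0))"
  by (cases "k = i") (auto simp: deriv_x_def mult_x_def fun_eq_iff fun_upd_twist algebra_simps)

lemma deriv_x_star_x:
  "deriv_x k (star_x \<theta> j p) m = mult_x j (deriv_x k p) m + (if k = j then p m else 0)
     + (\<Sum>l<j. \<theta> j l * deriv_x l (deriv_x k p) m)"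
  unfolding star_x_def linear_op_add[OF linear_op_deriv_x] linear_op_sum[OF linear_op_deriv_x]
    linear_op_smult[OF linear_op_deriv_x]
  by (simp add: deriv_x_mult_x deriv_x_commute)

lemma star_x_star_x:
  "star_x \<theta> i (star_x \<theta> j p) m = mult_x i (mult_x j p) m + (\<Sum>l<j. \<theta> j l * mult_x i (deriv_x l p) m)
     + (\<Sum>k<i. \<theta> i k * mult_x j (deriv_x k p) m) + (if j < i then \<theta> i j * p m else 0)
     + (\<Sum>k<i. \<Sum>l<j. \<theta> i k * \<theta> j l * deriv_x l (deriv_x k p) m)"
proof -
  have mult: "mult_x i (star_x \<theta> j p) m
      = mult_x i (mult_x j p) m + (\<Sum>l<j. \<theta> j l * mult_x i (deriv_x l p) m)"
    unfolding star_x_def linear_op_add[OF linear_op_mult_x] linear_op_sum[OF linear_op_mult_x]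
      linear_op_smult[OF linear_op_mult_x] by simp
  have delta: "(\<Sum>k<i. \<theta> i k * (if k = j then p m else 0)) = (if j < i then \<theta> i j * p m else 0)"
    by (auto simp: if_distrib sum.delta cong: if_cong)
  have "star_x \<theta> i (star_x \<theta> j p) m
      = mult_x i (star_x \<theta> j p) m + (\<Sum>k<i. \<theta> i k * deriv_x k (star_x \<theta> j p) m)"
    by (simp add: star_x_def)
  also have "\<dots> = mult_x i (mult_x j p) m + (\<Sum>l<j. \<theta> j l * mult_x i (deriv_x l p) m)
     + (\<Sum>k<i. \<theta> i k * mult_x j (deriv_x k p) m) + (\<Sum>k<i. \<theta> i k * (if k = j then p m else 0))
     + (\<Sum>k<i. \<Sum>l<j. \<theta> i k * \<theta> j l * deriv_x l (deriv_x k p) m)"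
    unfolding mult deriv_x_star_x
    by (simp only: distrib_left sum.distrib sum_distrib_left mult.assoc add.assoc)
  finally show ?thesis unfolding delta .
qed

lemma star_x_commutator:
  "star_x \<theta> i (star_x \<theta> j p) m - star_x \<theta> j (star_x \<theta> i p) m =
     ((if j < i then \<theta> i j else 0) - (if i < j then \<theta> j i else 0)) * p m"
proof -
  have "(\<Sum>k<i. \<Sum>l<j. \<theta> i k * \<theta> j l * deriv_x l (deriv_x k p) m) =
        (\<Sum>l<j. \<Sum>k<i. \<theta> j l * \<theta> i k * deriv_x k (deriv_x l p) m)"
    by (subst sum.swap) (simp add: deriv_x_commute mult.commute)
  then show ?thesis
    unfolding star_x_star_x[of \<theta> i j] star_x_star_x[of \<theta> j i] mult_x_commute[of i j]
    by (simp add: left_diff_distrib)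
qed

lemma star_x_commutator_antisymmetric:
  assumes "antisymmetric_matrix n \<theta>" "i < n" "j < n"
  shows "star_x \<theta> i (star_x \<theta> j p) m - star_x \<theta> j (star_x \<theta> i p) m = \<theta> i j * p m"
proof -
  have "\<theta> i j = - \<theta> j i" "\<theta> i i = - \<theta> i i"
    using assms unfolding antisymmetric_matrix_def by blast+
  then show ?thesis
    using star_x_commutator[of \<theta> i j p m] by (cases i j rule: linorder_cases) simp_all
qed

lemma star_x_mult_xi: "star_x \<theta> i (mult_xi j p) = mult_xi j (star_x \<theta> i p)"
  by (auto simp: star_x_def mult_x_apply deriv_x_apply mult_xi_def fun_eq_iff)

lemma mult_xi_mult_xi: "mult_xi i (mult_xi j p) = (\<lambda>m. 0)"
  by (auto simp: mult_xi_def fun_eq_iff)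

lemma pol_d_mult_xi: "pol_d (mult_xi i p) = (\<lambda>m. 0)"
  by (auto simp: mult_xi_def pol_d_def deriv_x_def fun_eq_iff split: option.splits)

lemma mult_xi_pol_d: "mult_xi i (pol_d p) = (\<lambda>m. 0)"
  by (auto simp: mult_xi_def pol_d_def fun_eq_iff)

lemma pol_d_pol_d: "pol_d (pol_d p) = (\<lambda>m. 0)"
  by (auto simp: pol_d_def deriv_x_def fun_eq_iff split: option.splits)

lemma pol_d_star_x: "pol_d (star_x \<theta> i p) = (\<lambda>m. star_x \<theta> i (pol_d p) m + mult_xi i p m)"
proof (rule ext, clarify)
  fix a s
  show "pol_d (star_x \<theta> i p) (a, s) = star_x \<theta> i (pol_d p) (a, s) + mult_xi i p (a, s)"
  proof (cases s)
    case None
    then show ?thesis by (simp add: star_x_def mult_x_apply deriv_x_apply pol_d_apply mult_xi_apply)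
  next
    case (Some k)
    have "pol_d (star_x \<theta> i p) (a, s) = deriv_x k (star_x \<theta> i p) (a, None)"
      by (simp add: pol_d_def Some)
    also have "\<dots> = star_x \<theta> i (pol_d p) (a, s) + mult_xi i p (a, s)"
      unfolding deriv_x_star_x
      by (simp add: Some star_x_def mult_x_apply deriv_x_apply pol_d_apply mult_xi_apply)
    finally show ?thesis .
  qed
qed

section \<open>The free algebra acts on symbols\<close>

fun gen_action :: "(nat \<Rightarrow> nat \<Rightarrow> real) \<Rightarrow> gen \<Rightarrow> pol \<Rightarrow> pol" where
  "gen_action \<theta> (Xg i) = star_x \<theta> i"
| "gen_action \<theta> (Eg i) = mult_xi i"

fun word_action :: "(nat \<Rightarrow> nat \<Rightarrow> real) \<Rightarrow> gen list \<Rightarrow> pol \<Rightarrow> pol" where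
  "word_action \<theta> [] p = p"
| "word_action \<theta> (a # w) p = gen_action \<theta> a (word_action \<theta> w p)"

lemma linear_op_gen_action: "linear_op (gen_action \<theta> a)"
  by (cases a) (simp_all add: linear_op_star_x linear_op_mult_xi)

lemma linear_op_word_action: "linear_op (word_action \<theta> w)"
proof (induction w)
  case (Cons a w)
  have "word_action \<theta> (a # w) = (\<lambda>p. gen_action \<theta> a (word_action \<theta> w p))" by (rule ext) simp
  then show ?case using linear_op_comp[OF linear_op_gen_action Cons.IH] by simp
qed (simp add: linear_op_def)

lemma word_action_append: "word_action \<theta> (u @ v) p = word_action \<theta> u (word_action \<theta> v p)"
  by (induction u) auto

definition supp :: "('a \<Rightarrow> real) \<Rightarrow> 'a set" where
  "supp f = {w. f w \<noteq> 0}"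

definition fa_action :: "(nat \<Rightarrow> nat \<Rightarrow> real) \<Rightarrow> (gen list \<Rightarrow> real) \<Rightarrow> pol \<Rightarrow> pol" where
  "fa_action \<theta> f p = (\<lambda>m. \<Sum>w\<in>supp f. f w * word_action \<theta> w p m)"

lemma fa_action_superset:
  assumes "finite S" "supp f \<subseteq> S"
  shows "fa_action \<theta> f p = (\<lambda>m. \<Sum>w\<in>S. f w * word_action \<theta> w p m)"
  unfolding fa_action_def
  by (rule ext, rule sum.mono_neutral_left) (use assms in \<open>auto simp: supp_def\<close>)

lemma linear_op_fa_action: "linear_op (fa_action \<theta> f)"
  unfolding linear_op_def fa_action_def
  by (simp add: linear_op_add[OF linear_op_word_action] linear_op_smult[OF linear_op_word_action]
      algebra_simps sum.distrib sum_distrib_left)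

lemma FA_iff: "f \<in> FA n \<longleftrightarrow> finite (supp f) \<and> (\<forall>w. f w \<noteq> 0 \<longrightarrow> set w \<subseteq> gens n)"
  by (simp add: FA_def supp_def)

lemma FA_finite_supp: "f \<in> FA n \<Longrightarrow> finite (supp f)"
  by (simp add: FA_iff)

definition fa_word :: "gen list \<Rightarrow> gen list \<Rightarrow> real" where
  "fa_word w = (\<lambda>v. if v = w then 1 else 0)"

lemma supp_fa_word: "supp (fa_word w) = {w}"
  by (auto simp: supp_def fa_word_def)

lemma finite_supp_fa_word: "finite (supp (fa_word w))"
  by (simp add: supp_fa_word)

lemma fa_action_fa_word: "fa_action \<theta> (fa_word w) p = word_action \<theta> w p"
  unfolding fa_action_def supp_fa_word by (simp add: fa_word_def)

lemma fa_one_eq_fa_word: "fa_one = fa_word []"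
  by (simp add: fa_one_def fa_word_def)

lemma fa_gen_eq_fa_word: "fa_gen a = fa_word [a]"
  by (simp add: fa_gen_def fa_word_def)

lemma fa_action_one: "fa_action \<theta> fa_one p = p"
  by (simp add: fa_one_eq_fa_word fa_action_fa_word)

lemma fa_action_zero: "fa_action \<theta> fa_zero p = (\<lambda>m. 0)"
  by (simp add: fa_action_def fa_zero_def supp_def)

lemma supp_add: "supp (fa_add f g) \<subseteq> supp f \<union> supp g"
  by (auto simp: supp_def fa_add_def)

lemma supp_sub: "supp (fa_sub f g) \<subseteq> supp f \<union> supp g"
  by (auto simp: supp_def fa_sub_def)

lemma supp_smult: "supp (fa_smult c f) \<subseteq> supp f"
  by (auto simp: supp_def fa_smult_def)

lemma supp_lincomb: "supp (\<lambda>v. \<Sum>k\<in>K. c k * F k v) \<subseteq> (\<Union>k\<in>K. supp (F k))"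
  by (auto simp: supp_def intro: ccontr)

lemma fa_action_add:
  assumes "finite (supp f)" "finite (supp g)"
  shows "fa_action \<theta> (fa_add f g) p = (\<lambda>m. fa_action \<theta> f p m + fa_action \<theta> g p m)"
  using assms fa_action_superset[of "supp f \<union> supp g"] supp_add[of f g]
  by (simp add: fa_add_def algebra_simps sum.distrib)

lemma fa_action_sub:
  assumes "finite (supp f)" "finite (supp g)"
  shows "fa_action \<theta> (fa_sub f g) p = (\<lambda>m. fa_action \<theta> f p m - fa_action \<theta> g p m)"
  using assms fa_action_superset[of "supp f \<union> supp g"] supp_sub[of f g]
  by (simp add: fa_sub_def algebra_simps sum_subtractf)

lemma fa_action_smult:
  assumes "finite (supp f)"
  shows "fa_action \<theta> (fa_smult c f) p = (\<lambda>m. c * fa_action \<theta> f p m)"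
  using assms fa_action_superset[of "supp f" "fa_smult c f"] supp_smult[of c f]
  by (simp add: fa_action_def fa_smult_def sum_distrib_left mult.assoc)

lemma fa_action_lincomb:
  assumes "finite K" "\<And>k. k \<in> K \<Longrightarrow> finite (supp (F k))"
  shows "fa_action \<theta> (\<lambda>v. \<Sum>k\<in>K. c k * F k v) p = (\<lambda>m. \<Sum>k\<in>K. c k * fa_action \<theta> (F k) p m)"
proof (rule ext)
  fix m
  let ?S = "\<Union>k\<in>K. supp (F k)"
  have S: "finite ?S" using assms by auto
  have "fa_action \<theta> (\<lambda>v. \<Sum>k\<in>K. c k * F k v) p m
      = (\<Sum>k\<in>K. c k * (\<Sum>w\<in>?S. F k w * word_action \<theta> w p m))"
    unfolding fa_action_superset[OF S supp_lincomb]
    by (simp add: sum_distrib_right sum_distrib_left mult.assoc) (rule sum.swap)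
  also have "\<dots> = (\<Sum>k\<in>K. c k * fa_action \<theta> (F k) p m)"
  proof (rule sum.cong[OF refl])
    fix k assume "k \<in> K"
    then have "supp (F k) \<subseteq> ?S" by auto
    then show "c k * (\<Sum>w\<in>?S. F k w * word_action \<theta> w p m) = c k * fa_action \<theta> (F k) p m"
      using fa_action_superset[OF S, of "F k" \<theta> p] by simp
  qed
  finally show "fa_action \<theta> (\<lambda>v. \<Sum>k\<in>K. c k * F k v) p m = (\<Sum>k\<in>K. c k * fa_action \<theta> (F k) p m)" .
qed

definition splits :: "gen list \<Rightarrow> (gen list \<times> gen list) set" where
  "splits w = {(u,v). u @ v = w}"

lemma splits_eq_image: "splits w = (\<lambda>k. (take k w, drop k w)) ` {0..length w}"
proof
  show "splits w \<subseteq> (\<lambda>k. (take k w, drop k w)) ` {0..length w}"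
  proof clarify
    fix u v assume "(u, v) \<in> splits w"
    then show "(u, v) \<in> (\<lambda>k. (take k w, drop k w)) ` {0..length w}"
      by (intro image_eqI[of _ _ "length u"]) (auto simp: splits_def)
  qed
qed (auto simp: splits_def)

lemma finite_splits: "finite (splits w)"
  by (simp add: splits_eq_image)

lemma fa_mult_splits: "fa_mult f g w = (\<Sum>x\<in>splits w. f (fst x) * g (snd x))"
proof -
  have "inj_on (\<lambda>k. (take k w, drop k w)) {0..length w}"
    by (rule inj_onI) (auto dest: arg_cong[of _ _ length])
  then show ?thesis
    unfolding splits_eq_image fa_mult_def by (simp add: sum.reindex comp_def)
qed

lemma fa_mult_nonzero: "fa_mult f g w \<noteq> 0 \<Longrightarrow> \<exists>u v. w = u @ v \<and> f u \<noteq> 0 \<and> g v \<noteq> 0"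
proof -
  assume "fa_mult f g w \<noteq> 0"
  then obtain x where "x \<in> splits w" "f (fst x) * g (snd x) \<noteq> 0"
    unfolding fa_mult_splits by (meson sum.not_neutral_contains_not_neutral)
  then show ?thesis by (cases x) (auto simp: splits_def)
qed

lemma supp_mult: "supp (fa_mult f g) \<subseteq> (\<lambda>x. fst x @ snd x) ` (supp f \<times> supp g)"
proof
  fix w assume "w \<in> supp (fa_mult f g)"
  then obtain u v where "w = u @ v" "f u \<noteq> 0" "g v \<noteq> 0"
    using fa_mult_nonzero[of f g w] by (auto simp: supp_def)
  then show "w \<in> (\<lambda>x. fst x @ snd x) ` (supp f \<times> supp g)"
    by (intro image_eqI[of _ _ "(u,v)"]) (auto simp: supp_def)
qed

lemma fa_action_mult:
  assumes "finite (supp f)" "finite (supp g)"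
  shows "fa_action \<theta> (fa_mult f g) p = fa_action \<theta> f (fa_action \<theta> g p)"
proof (rule ext)
  fix m
  let ?A = "supp f" and ?B = "supp g"
  let ?S = "(\<lambda>x. fst x @ snd x) ` (?A \<times> ?B)"
  have split_sum: "fa_mult f g w = (\<Sum>x\<in>{x\<in>?A \<times> ?B. fst x @ snd x = w}. f (fst x) * g (snd x))" for w
  proof -
    have "fa_mult f g w = (\<Sum>x\<in>splits w \<inter> (?A \<times> ?B). f (fst x) * g (snd x))"
      unfolding fa_mult_splits
      by (rule sum.mono_neutral_right) (use assms finite_splits in \<open>auto simp: supp_def\<close>)
    also have "splits w \<inter> (?A \<times> ?B) = {x\<in>?A \<times> ?B. fst x @ snd x = w}"
      by (auto simp: splits_def)
    finally show ?thesis .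
  qed
  have "fa_action \<theta> (fa_mult f g) p m = (\<Sum>w\<in>?S. fa_mult f g w * word_action \<theta> w p m)"
    using fa_action_superset[OF _ supp_mult] assms by simp
  also have "\<dots> = (\<Sum>w\<in>?S. \<Sum>x\<in>{x\<in>?A \<times> ?B. fst x @ snd x = w}.
                      f (fst x) * g (snd x) * word_action \<theta> (fst x @ snd x) p m)"
    by (simp add: split_sum sum_distrib_right)
  also have "\<dots> = (\<Sum>x\<in>?A \<times> ?B. f (fst x) * g (snd x) * word_action \<theta> (fst x @ snd x) p m)"
    by (rule sum.group) (use assms in auto)
  also have "\<dots> = fa_action \<theta> f (fa_action \<theta> g p) m"
    unfolding fa_action_def linear_op_sum[OF linear_op_word_action]
      linear_op_smult[OF linear_op_word_action]
    by (simp add: sum.cartesian_product word_action_append case_prod_beta sum_distrib_left mult.assoc)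
  finally show "fa_action \<theta> (fa_mult f g) p m = fa_action \<theta> f (fa_action \<theta> g p) m" .
qed

lemma gens_Xg [simp]: "Xg i \<in> gens n \<longleftrightarrow> i < n"
  by (auto simp: gens_def)

lemma gens_Eg [simp]: "Eg i \<in> gens n \<longleftrightarrow> i < n"
  by (auto simp: gens_def)

lemma FA_lincomb:
  assumes "finite K" "\<And>k. k \<in> K \<Longrightarrow> F k \<in> FA n"
  shows "(\<lambda>v. \<Sum>k\<in>K. c k * F k v) \<in> FA n"
proof -
  have "finite (supp (\<lambda>v. \<Sum>k\<in>K. c k * F k v))"
    by (rule finite_subset[OF supp_lincomb]) (use assms FA_finite_supp in auto)
  moreover have "set v \<subseteq> gens n" if nz: "(\<Sum>k\<in>K. c k * F k v) \<noteq> 0" for v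
  proof -
    obtain k where "k \<in> K" "c k * F k v \<noteq> 0"
      using sum.not_neutral_contains_not_neutral[OF nz] by blast
    then show ?thesis using assms(2)[of k] by (auto simp: FA_iff)
  qed
  ultimately show ?thesis by (simp add: FA_iff)
qed

lemma FA_supp_subset:
  assumes "f \<in> FA n" "g \<in> FA n" "supp h \<subseteq> supp f \<union> supp g"
  shows "h \<in> FA n"
proof -
  have "finite (supp h)"
    using assms by (meson FA_finite_supp finite_Un finite_subset)
  moreover have "set w \<subseteq> gens n" if "h w \<noteq> 0" for w
    using that assms by (auto simp: FA_iff supp_def)
  ultimately show ?thesis by (simp add: FA_iff)
qed

lemma FA_add: "f \<in> FA n \<Longrightarrow> g \<in> FA n \<Longrightarrow> fa_add f g \<in> FA n"
  using FA_supp_subset supp_add by blast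

lemma FA_sub: "f \<in> FA n \<Longrightarrow> g \<in> FA n \<Longrightarrow> fa_sub f g \<in> FA n"
  using FA_supp_subset supp_sub by blast

lemma FA_smult: "f \<in> FA n \<Longrightarrow> fa_smult c f \<in> FA n"
  using FA_supp_subset[of f n f] supp_smult by blast

lemma FA_mult: "f \<in> FA n \<Longrightarrow> g \<in> FA n \<Longrightarrow> fa_mult f g \<in> FA n"
proof -
  assume f: "f \<in> FA n" and g: "g \<in> FA n"
  have "finite (supp (fa_mult f g))"
    by (rule finite_subset[OF supp_mult]) (use f g FA_finite_supp in auto)
  moreover have "set w \<subseteq> gens n" if nz: "fa_mult f g w \<noteq> 0" for w
  proof -
    obtain u v where "w = u @ v" "f u \<noteq> 0" "g v \<noteq> 0" using fa_mult_nonzero[OF nz] by blast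
    then show ?thesis using f g by (auto simp: FA_iff)
  qed
  ultimately show ?thesis by (simp add: FA_iff)
qed

lemma FA_zero: "fa_zero \<in> FA n"
  by (simp add: FA_iff fa_zero_def supp_def)

lemma FA_fa_word: "set w \<subseteq> gens n \<Longrightarrow> fa_word w \<in> FA n"
  by (simp add: FA_iff supp_fa_word) (simp add: fa_word_def)

lemma FA_one: "fa_one \<in> FA n"
  by (simp add: fa_one_eq_fa_word FA_fa_word)

lemma FA_gen: "a \<in> gens n \<Longrightarrow> fa_gen a \<in> FA n"
  by (simp add: fa_gen_eq_fa_word FA_fa_word)

lemma A_rels_FA: "r \<in> A_rels n \<theta> \<Longrightarrow> r \<in> FA n"
  unfolding A_rels_def by (auto intro!: FA_sub FA_mult FA_gen FA_smult FA_one)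

lemma A_ideal_FA: "f \<in> A_ideal n \<theta> \<Longrightarrow> f \<in> FA n"
  by (induction rule: A_ideal.induct)
    (auto intro: A_rels_FA FA_zero FA_add FA_smult FA_mult)

lemma fa_action_rels:
  assumes "antisymmetric_matrix n \<theta>" "r \<in> A_rels n \<theta>"
  shows "fa_action \<theta> r p = (\<lambda>m. 0)"
proof -
  have fin_gen_mult: "finite (supp (fa_mult (fa_gen a) (fa_gen b)))" for a b
    by (rule finite_subset[OF supp_mult]) (simp add: fa_gen_eq_fa_word finite_supp_fa_word)
  have fin_one: "finite (supp fa_one)"
    by (simp add: fa_one_eq_fa_word finite_supp_fa_word)
  have fin_sub: "finite (supp (fa_sub f g))" if "finite (supp f)" "finite (supp g)" for f g
    by (rule finite_subset[OF supp_sub]) (use that in auto)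
  have gen_mult: "fa_action \<theta> (fa_mult (fa_gen a) (fa_gen b)) q = gen_action \<theta> a (gen_action \<theta> b q)"
    for a b q by (simp add: fa_action_mult fa_gen_eq_fa_word finite_supp_fa_word fa_action_fa_word)
  from assms(2) consider
      (xx) i j where "i < n" "j < n" "r = fa_sub (fa_sub (fa_mult (fa_gen (Xg i)) (fa_gen (Xg j)))
                        (fa_mult (fa_gen (Xg j)) (fa_gen (Xg i)))) (fa_smult (\<theta> i j) fa_one)"
    | (x_xi) i j where "r = fa_sub (fa_mult (fa_gen (Xg i)) (fa_gen (Eg j))) (fa_mult (fa_gen (Eg j)) (fa_gen (Xg i)))"
    | (xi_xi) i j where "r = fa_mult (fa_gen (Eg i)) (fa_gen (Eg j))"
    unfolding A_rels_def by blast
  then show ?thesis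
  proof cases
    case xx
    then show ?thesis
      by (simp add: fa_action_sub fin_sub fin_gen_mult fin_one gen_mult fa_action_smult
          fa_action_one star_x_commutator_antisymmetric[OF assms(1)] finite_subset[OF supp_smult])
  qed (simp_all add: fa_action_sub fin_gen_mult gen_mult star_x_mult_xi mult_xi_mult_xi)
qed

lemma fa_action_A_ideal:
  assumes "antisymmetric_matrix n \<theta>"
  shows "f \<in> A_ideal n \<theta> \<Longrightarrow> fa_action \<theta> f p = (\<lambda>m. 0)"
proof (induction arbitrary: p rule: A_ideal.induct)
  case (rel r)
  then show ?case using fa_action_rels[OF assms] by blast
qed (auto simp: fa_action_zero fa_action_add fa_action_smult fa_action_mult
      FA_finite_supp[OF A_ideal_FA] FA_finite_supp linear_op_zero[OF linear_op_fa_action])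

section \<open>The differential on symbols\<close>

definition word_sign :: "gen list \<Rightarrow> real" where
  "word_sign w = (if even (word_deg w) then 1 else -1)"

lemma word_deg_Nil [simp]: "word_deg [] = 0" by (simp add: word_deg_def)

lemma word_deg_Xg [simp]: "word_deg (Xg i # w) = word_deg w" by (simp add: word_deg_def)

lemma word_deg_Eg [simp]: "word_deg (Eg i # w) = Suc (word_deg w)" by (simp add: word_deg_def)

lemma word_deg_append [simp]: "word_deg (u @ v) = word_deg u + word_deg v"
  by (simp add: word_deg_def)

lemma word_sign_Nil [simp]: "word_sign [] = 1" by (simp add: word_sign_def)

lemma word_sign_Xg [simp]: "word_sign (Xg i # w) = word_sign w" by (simp add: word_sign_def)

lemma word_sign_Eg [simp]: "word_sign (Eg i # w) = - word_sign w" by (simp add: word_sign_def)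

fun word_d_action :: "(nat \<Rightarrow> nat \<Rightarrow> real) \<Rightarrow> gen list \<Rightarrow> pol \<Rightarrow> pol" where
  "word_d_action \<theta> [] p = (\<lambda>m. 0)"
| "word_d_action \<theta> (Xg i # w) p = (\<lambda>m. mult_xi i (word_action \<theta> w p) m + star_x \<theta> i (word_d_action \<theta> w p) m)"
| "word_d_action \<theta> (Eg i # w) p = (\<lambda>m. - mult_xi i (word_d_action \<theta> w p) m)"

lemma pol_d_word_action:
  "pol_d (word_action \<theta> w p) = (\<lambda>m. word_d_action \<theta> w p m + word_sign w * word_action \<theta> w (pol_d p) m)"
proof (induction w)
  case Nil
  then show ?case by simp
next
  case (Cons a w)
  show ?case
  proof (cases a)
    case (Xg i)
    have "pol_d (word_action \<theta> (a # w) p) = pol_d (star_x \<theta> i (word_action \<theta> w p))"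
      by (simp add: Xg)
    also have "\<dots> = (\<lambda>m. star_x \<theta> i (pol_d (word_action \<theta> w p)) m + mult_xi i (word_action \<theta> w p) m)"
      by (rule pol_d_star_x)
    also have "\<dots> = (\<lambda>m. word_d_action \<theta> (a # w) p m + word_sign (a # w) * word_action \<theta> (a # w) (pol_d p) m)"
      unfolding Cons.IH linear_op_add[OF linear_op_star_x] linear_op_smult[OF linear_op_star_x] by (simp add: Xg fun_eq_iff)
    finally show ?thesis .
  next
    case (Eg i)
    have "(\<lambda>m. word_d_action \<theta> (a # w) p m + word_sign (a # w) * word_action \<theta> (a # w) (pol_d p) m)
        = (\<lambda>m. - mult_xi i (\<lambda>m. word_d_action \<theta> w p m + word_sign w * word_action \<theta> w (pol_d p) m) m)"
      unfolding linear_op_add[OF linear_op_mult_xi] linear_op_smult[OF linear_op_mult_xi] by (simp add: Eg)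
    also have "\<dots> = (\<lambda>m. 0)" unfolding Cons.IH[symmetric] mult_xi_pol_d by simp
    finally show ?thesis by (simp add: Eg pol_d_mult_xi)
  qed
qed

lemma fa_mult_fa_word_left:
  "fa_mult (fa_word u) g w = (if take (length u) w = u then g (drop (length u) w) else 0)"
proof -
  have "fa_mult (fa_word u) g w = (\<Sum>x\<in>splits w. fa_word u (fst x) * g (snd x))"
    by (rule fa_mult_splits)
  also have "\<dots> = (\<Sum>x\<in>splits w \<inter> {x. fst x = u}. g (snd x))"
    by (rule sum.mono_neutral_cong_right) (auto simp: finite_splits fa_word_def)
  also have "splits w \<inter> {x. fst x = u} = (if take (length u) w = u then {(u, drop (length u) w)} else {})"
    by (auto simp: splits_def) (metis append_take_drop_id)+
  finally show ?thesis by simp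
qed

lemma fa_mult_fa_word_singleton:
  "fa_mult (fa_word [a]) g [] = 0" "fa_mult (fa_word [a]) g (b # v) = (if b = a then g v else 0)"
  by (simp_all add: fa_mult_fa_word_left)

lemma fa_d_Nil: "fa_d f [] = 0" by (simp add: fa_d_def)

lemma fa_d_Cons: "fa_d f (b # v) =
   (case b of Eg i \<Rightarrow> f (Xg i # v) | Xg i \<Rightarrow> 0) +
   (if is_xi b then -1 else 1) * fa_d (\<lambda>u. f (b # u)) v"
proof -
  have "fa_d f (b # v) = (\<Sum>p<Suc (length v). (case (b # v) ! p of
       Eg i \<Rightarrow> (if even (word_deg (take p (b # v))) then 1 else -1) * f ((b # v)[p := Xg i])
     | Xg i \<Rightarrow> 0))" by (simp add: fa_d_def)
  also have "\<dots> = (case b of Eg i \<Rightarrow> f (Xg i # v) | Xg i \<Rightarrow> 0) +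
     (\<Sum>p<length v. (case v ! p of
       Eg i \<Rightarrow> (if even (word_deg (take (Suc p) (b # v))) then 1 else -1) * f (b # v[p := Xg i])
     | Xg i \<Rightarrow> 0))"
  proof -
    have u: "(b # v)[Suc p := x] = b # v[p := x]" for p x by simp
    have h: "(case (b # v) ! 0 of
       Eg i \<Rightarrow> (if even (word_deg (take 0 (b # v))) then 1 else -1) * f ((b # v)[0 := Xg i])
     | Xg i \<Rightarrow> 0) = (case b of Eg i \<Rightarrow> f (Xg i # v) | Xg i \<Rightarrow> 0)"
      by (cases b) simp_all
    show ?thesis unfolding sum.lessThan_Suc_shift h nth_Cons_Suc u ..
  qed
  also have "(\<Sum>p<length v. (case v ! p of
       Eg i \<Rightarrow> (if even (word_deg (take (Suc p) (b # v))) then 1 else -1) * f (b # v[p := Xg i])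
     | Xg i \<Rightarrow> 0)) = (if is_xi b then -1 else 1) * fa_d (\<lambda>u. f (b # u)) v"
    unfolding fa_d_def sum_distrib_left
    by (rule sum.cong[OF refl]) (cases b; simp split: gen.split)
  finally show ?thesis .
qed

lemma fa_d_fa_word_Xg:
  "fa_d (fa_word (Xg i # w)) = fa_add (fa_word (Eg i # w)) (fa_mult (fa_word [Xg i]) (fa_d (fa_word w)))"
proof (rule ext)
  fix v
  show "fa_d (fa_word (Xg i # w)) v = fa_add (fa_word (Eg i # w)) (fa_mult (fa_word [Xg i]) (fa_d (fa_word w))) v"
  proof (cases v)
    case Nil
    then show ?thesis by (simp add: fa_d_Nil fa_add_def fa_mult_fa_word_singleton) (simp add: fa_word_def)
  next
    case (Cons b v')
    have e: "(\<lambda>u. fa_word (Xg i # w) (b # u)) = (if b = Xg i then fa_word w else (\<lambda>u. 0))"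
      by (auto simp: fa_word_def)
    have z: "fa_d (\<lambda>u. 0) v' = 0" unfolding fa_d_def by (rule sum.neutral) (simp split: gen.split)
    show ?thesis unfolding Cons fa_d_Cons e fa_add_def fa_mult_fa_word_singleton(2)
      by (cases b) (auto simp: fa_word_def z)
  qed
qed

lemma fa_d_fa_word_Eg:
  "fa_d (fa_word (Eg i # w)) = fa_smult (-1) (fa_mult (fa_word [Eg i]) (fa_d (fa_word w)))"
proof (rule ext)
  fix v
  show "fa_d (fa_word (Eg i # w)) v = fa_smult (-1) (fa_mult (fa_word [Eg i]) (fa_d (fa_word w))) v"
  proof (cases v)
    case Nil
    then show ?thesis by (simp add: fa_d_Nil fa_smult_def fa_mult_fa_word_singleton)
  next
    case (Cons b v')
    have e: "(\<lambda>u. fa_word (Eg i # w) (b # u)) = (if b = Eg i then fa_word w else (\<lambda>u. 0))"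
      by (auto simp: fa_word_def)
    have z: "fa_d (\<lambda>u. 0) v' = 0" unfolding fa_d_def by (rule sum.neutral) (simp split: gen.split)
    show ?thesis unfolding Cons fa_d_Cons e fa_smult_def fa_mult_fa_word_singleton(2)
      by (cases b) (auto simp: fa_word_def z)
  qed
qed

lemma fa_decomp:
  assumes "finite S" "supp f \<subseteq> S"
  shows "f = (\<lambda>w. \<Sum>u\<in>S. f u * fa_word u w)"
proof (rule ext)
  fix w
  have "(\<Sum>u\<in>S. f u * fa_word u w) = (\<Sum>u\<in>S. if u = w then f u else 0)"
    by (rule sum.cong) (auto simp: fa_word_def)
  also have "\<dots> = f w" using assms by (auto simp: sum.delta supp_def)
  finally show "f w = (\<Sum>u\<in>S. f u * fa_word u w)" by simp
qed

lemma fa_d_lincomb: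
  "fa_d (\<lambda>w. \<Sum>k\<in>K. c k * F k w) = (\<lambda>v. \<Sum>k\<in>K. c k * fa_d (F k) v)"
proof (rule ext)
  fix v
  have "fa_d (\<lambda>w. \<Sum>k\<in>K. c k * F k w) v = (\<Sum>p<length v. \<Sum>k\<in>K. c k * (case v ! p of
       Eg i \<Rightarrow> (if even (word_deg (take p v)) then 1 else -1) * F k (v[p := Xg i])
     | Xg i \<Rightarrow> 0))"
    unfolding fa_d_def
    by (rule sum.cong[OF refl]) (simp add: sum_distrib_left algebra_simps split: gen.split)
  also have "\<dots> = (\<Sum>k\<in>K. c k * fa_d (F k) v)"
    by (subst sum.swap) (simp add: fa_d_def sum_distrib_left)
  finally show "fa_d (\<lambda>w. \<Sum>k\<in>K. c k * F k w) v = (\<Sum>k\<in>K. c k * fa_d (F k) v)" .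
qed

lemma fa_d_fa_word_Nil: "fa_d (fa_word []) = fa_zero"
proof (rule ext)
  fix x :: "gen list"
  have ne: "x[p := y] \<noteq> []" if "p < length x" for p y using that by (cases x; cases p) auto
  show "fa_d (fa_word []) x = fa_zero x"
    unfolding fa_d_def fa_zero_def by (rule sum.neutral) (auto simp: fa_word_def ne split: gen.split)
qed

lemma FA_d_fa_word: "set w \<subseteq> gens n \<Longrightarrow> fa_d (fa_word w) \<in> FA n"
proof (induction w)
  case Nil
  then show ?case by (simp add: FA_zero fa_d_fa_word_Nil)
next
  case (Cons a w)
  then have a: "a \<in> gens n" and w: "set w \<subseteq> gens n" by auto
  show ?case
  proof (cases a)
    case (Xg i)
    then have "i < n" using a by simp
    then show ?thesis unfolding Xg fa_d_fa_word_Xg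
      using Cons.IH[OF w] w by (auto intro!: FA_add FA_fa_word FA_mult)
  next
    case (Eg i)
    then have "i < n" using a by simp
    then show ?thesis unfolding Eg fa_d_fa_word_Eg
      using Cons.IH[OF w] w by (auto intro!: FA_smult FA_fa_word FA_mult)
  qed
qed

lemma fa_d_decomp:
  assumes "finite S" "supp f \<subseteq> S"
  shows "fa_d f = (\<lambda>v. \<Sum>u\<in>S. f u * fa_d (fa_word u) v)"
  by (subst fa_decomp[OF assms]) (rule fa_d_lincomb)

lemma FA_d: "f \<in> FA n \<Longrightarrow> fa_d f \<in> FA n"
proof -
  assume f: "f \<in> FA n"
  have "fa_d f = (\<lambda>v. \<Sum>u\<in>supp f. f u * fa_d (fa_word u) v)"
    by (rule fa_d_decomp) (use f FA_finite_supp in auto)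
  also have "\<dots> \<in> FA n"
  proof (rule FA_lincomb)
    show "finite (supp f)" using f by (rule FA_finite_supp)
    fix k assume "k \<in> supp f"
    then have "set k \<subseteq> gens n" using f by (auto simp: FA_iff supp_def)
    then show "fa_d (fa_word k) \<in> FA n" by (rule FA_d_fa_word)
  qed
  finally show ?thesis .
qed

lemma finite_supp_fa_d_fa_word: "finite (supp (fa_d (fa_word w)))"
proof (induction w)
  case Nil
  then show ?case by (simp add: fa_d_fa_word_Nil supp_def fa_zero_def)
next
  case (Cons a w)
  have fm: "finite (supp (fa_mult (fa_word [a]) (fa_d (fa_word w))))"
    by (rule finite_subset[OF supp_mult]) (simp add: finite_supp_fa_word Cons.IH)
  show ?case
  proof (cases a)
    case (Xg i)
    show ?thesis unfolding Xg fa_d_fa_word_Xg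
      by (rule finite_subset[OF supp_add]) (use fm Xg finite_supp_fa_word in auto)
  next
    case (Eg i)
    show ?thesis unfolding Eg fa_d_fa_word_Eg
      by (rule finite_subset[OF supp_smult]) (use fm Eg in auto)
  qed
qed

lemma fa_action_d_fa_word: "fa_action \<theta> (fa_d (fa_word w)) p = word_d_action \<theta> w p"
proof (induction w arbitrary: p)
  case Nil
  then show ?case by (simp add: fa_action_zero fa_d_fa_word_Nil)
next
  case (Cons a w)
  have fm: "finite (supp (fa_mult (fa_word [a]) (fa_d (fa_word w))))"
    by (rule finite_subset[OF supp_mult]) (simp add: finite_supp_fa_word finite_supp_fa_d_fa_word)
  show ?case
  proof (cases a)
    case (Xg i)
    show ?thesis unfolding Xg fa_d_fa_word_Xg
      using fm Xg by (simp add: fa_action_add finite_supp_fa_word fa_action_mult finite_supp_fa_d_fa_word fa_action_fa_word Cons.IH)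
  next
    case (Eg i)
    show ?thesis unfolding Eg fa_d_fa_word_Eg
      using fm Eg by (simp add: fa_action_smult fa_action_mult finite_supp_fa_word finite_supp_fa_d_fa_word fa_action_fa_word Cons.IH)
  qed
qed

lemma fa_action_d:
  assumes "finite S" "supp f \<subseteq> S"
  shows "fa_action \<theta> (fa_d f) p = (\<lambda>m. \<Sum>u\<in>S. f u * word_d_action \<theta> u p m)"
  unfolding fa_d_decomp[OF assms]
  by (subst fa_action_lincomb) (simp_all add: assms finite_supp_fa_d_fa_word fa_action_d_fa_word)

definition pol_one :: pol where
  "pol_one = (\<lambda>(a,s). if a = (\<lambda>_. 0) \<and> s = None then 1 else 0)"

lemma pol_d_pol_one: "pol_d pol_one = (\<lambda>m. 0)"
proof (rule ext, clarify)
  fix a :: "nat \<Rightarrow> nat" and s :: "nat option"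
  have "a(i := Suc (a i)) \<noteq> (\<lambda>_. 0)" for i by (metis fun_upd_same nat.distinct(1))
  then show "pol_d pol_one (a, s) = 0"
    by (auto simp: pol_d_def deriv_x_def pol_one_def split: option.splits)
qed

definition fa_symbol :: "(nat \<Rightarrow> nat \<Rightarrow> real) \<Rightarrow> (gen list \<Rightarrow> real) \<Rightarrow> pol" where
  "fa_symbol \<theta> f = fa_action \<theta> f pol_one"

lemma pol_d_fa_action:
  assumes "finite (supp f)"
  shows "pol_d (fa_action \<theta> f q) = (\<lambda>m. fa_action \<theta> (fa_d f) q m + (\<Sum>u\<in>supp f. f u * word_sign u * word_action \<theta> u (pol_d q) m))"
proof -
  have "pol_d (fa_action \<theta> f q) = (\<lambda>m. \<Sum>u\<in>supp f. f u * pol_d (word_action \<theta> u q) m)"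
    unfolding fa_action_def linear_op_sum[OF linear_op_pol_d] linear_op_smult[OF linear_op_pol_d] ..
  also have "\<dots> = (\<lambda>m. fa_action \<theta> (fa_d f) q m + (\<Sum>u\<in>supp f. f u * word_sign u * word_action \<theta> u (pol_d q) m))"
    unfolding pol_d_word_action fa_action_d[OF assms order_refl]
    by (simp add: algebra_simps sum.distrib)
  finally show ?thesis .
qed

lemma fa_symbol_d:
  assumes "finite (supp f)"
  shows "fa_symbol \<theta> (fa_d f) = pol_d (fa_symbol \<theta> f)"
  unfolding fa_symbol_def pol_d_fa_action[OF assms] pol_d_pol_one
  by (simp add: linear_op_zero[OF linear_op_word_action])

lemma fa_homog_word_sign: "fa_homog k f \<Longrightarrow> f u \<noteq> 0 \<Longrightarrow> word_sign u = (if even k then 1 else -1)"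
  by (auto simp: fa_homog_def word_sign_def)

lemma pol_d_fa_action_fa_homog:
  assumes "finite (supp f)" "fa_homog k f"
  shows "pol_d (fa_action \<theta> f q) = (\<lambda>m. fa_action \<theta> (fa_d f) q m + (if even k then 1 else -1) * fa_action \<theta> f (pol_d q) m)"
proof -
  have "(\<Sum>u\<in>supp f. f u * word_sign u * word_action \<theta> u (pol_d q) m) = (if even k then 1 else -1) * fa_action \<theta> f (pol_d q) m" for m
    unfolding fa_action_def sum_distrib_left
    by (rule sum.cong[OF refl]) (use fa_homog_word_sign[OF assms(2)] in \<open>auto simp: supp_def\<close>)
  then show ?thesis unfolding pol_d_fa_action[OF assms(1)] by simp
qed

section \<open>Ordered words\<close>

definition pol_monom :: "monomial \<Rightarrow> pol" where
  "pol_monom m = (\<lambda>m'. if m' = m then 1 else 0)"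

lemma pol_one_eq_pol_monom: "pol_one = pol_monom (\<lambda>_. 0, None)"
  by (auto simp: pol_one_def pol_monom_def fun_eq_iff)

definition valid_monomial :: "nat \<Rightarrow> monomial \<Rightarrow> bool" where
  "valid_monomial n m \<longleftrightarrow> (\<forall>j. n \<le> j \<longrightarrow> fst m j = 0) \<and> (case snd m of None \<Rightarrow> True | Some i \<Rightarrow> i < n)"

definition x_word :: "nat \<Rightarrow> nat \<Rightarrow> (nat \<Rightarrow> nat) \<Rightarrow> gen list" where
  "x_word n k a = concat (map (\<lambda>j. replicate (a j) (Xg j)) [k..<n])"

definition xi_word :: "nat option \<Rightarrow> gen list" where
  "xi_word s = (case s of None \<Rightarrow> [] | Some i \<Rightarrow> [Eg i])"

definition ordered_word :: "nat \<Rightarrow> monomial \<Rightarrow> gen list" where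
  "ordered_word n m = x_word n 0 (fst m) @ xi_word (snd m)"

lemma x_word_step: "k < n \<Longrightarrow> x_word n k a = replicate (a k) (Xg k) @ x_word n (Suc k) a"
  by (simp add: x_word_def upt_conv_Cons)

lemma x_word_end: "n \<le> k \<Longrightarrow> x_word n k a = []"
  by (simp add: x_word_def)

lemma star_x_pol_monom:
  assumes "\<forall>j<k. b j = 0"
  shows "star_x \<theta> k (pol_monom (b,s)) = pol_monom (b(k := Suc (b k)), s)"
proof -
  have d: "deriv_x j (pol_monom (b,s)) = (\<lambda>m. 0)" if "j < k" for j
  proof (rule ext, clarify)
    fix a :: "nat \<Rightarrow> nat" and s' :: "nat option"
    have "a(j := Suc (a j)) \<noteq> b" using assms that by (metis fun_upd_same nat.distinct(1))
    then show "deriv_x j (pol_monom (b,s)) (a,s') = 0" by (simp add: deriv_x_def pol_monom_def)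
  qed
  have m: "mult_x k (pol_monom (b,s)) = pol_monom (b(k := Suc (b k)), s)"
  proof (rule ext, clarify)
    fix a :: "nat \<Rightarrow> nat" and s' :: "nat option"
    have "(a k \<noteq> 0 \<and> a(k := a k - 1) = b) \<longleftrightarrow> a = b(k := Suc (b k))"
    proof
      assume h: "a k \<noteq> 0 \<and> a(k := a k - 1) = b"
      show "a = b(k := Suc (b k))"
      proof
        fix x show "a x = (b(k := Suc (b k))) x"
          using h by (cases "x = k") (auto dest: fun_cong[of _ _ x] fun_cong[of _ _ k])
      qed
    next
      assume "a = b(k := Suc (b k))"
      then show "a k \<noteq> 0 \<and> a(k := a k - 1) = b" by auto
    qed
    then show "mult_x k (pol_monom (b,s)) (a,s') = pol_monom (b(k := Suc (b k)), s) (a,s')"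
      by (auto simp: mult_x_def pol_monom_def)
  qed
  show ?thesis unfolding star_x_def m by (simp add: d)
qed

lemma word_action_rep:
  assumes "\<forall>j<k. b j = 0"
  shows "word_action \<theta> (replicate c (Xg k)) (pol_monom (b,s)) = pol_monom (b(k := b k + c), s)"
proof (induction c)
  case 0
  then show ?case by simp
next
  case (Suc c)
  have z: "\<forall>j<k. (b(k := b k + c)) j = 0" using assms by auto
  have "word_action \<theta> (replicate (Suc c) (Xg k)) (pol_monom (b,s)) = star_x \<theta> k (pol_monom (b(k := b k + c), s))"
    unfolding Suc[symmetric] by simp
  also have "\<dots> = pol_monom ((b(k := b k + c))(k := Suc ((b(k := b k + c)) k)), s)"
    by (rule star_x_pol_monom[OF z])
  also have "(b(k := b k + c))(k := Suc ((b(k := b k + c)) k)) = b(k := b k + Suc c)"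
    by (simp add: fun_eq_iff)
  finally show ?case .
qed

lemma word_action_x_word:
  "k \<le> n \<Longrightarrow> word_action \<theta> (x_word n k a) (pol_monom (\<lambda>_. 0, s)) = pol_monom (\<lambda>j. if k \<le> j \<and> j < n then a j else 0, s)"
proof (induction "n - k" arbitrary: k)
  case 0
  then have "k = n" by simp
  moreover have "(\<lambda>j. if n \<le> j \<and> j < n then a j else 0) = (\<lambda>_. 0)" by auto
  ultimately show ?case by (simp add: x_word_end)
next
  case (Suc x)
  then have k: "k < n" by simp
  have IH: "word_action \<theta> (x_word n (Suc k) a) (pol_monom (\<lambda>_. 0, s)) = pol_monom (\<lambda>j. if Suc k \<le> j \<and> j < n then a j else 0, s)"
    using Suc by simp
  have z: "\<forall>j<k. (\<lambda>j. if Suc k \<le> j \<and> j < n then a j else 0) j = 0" by simp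
  have e: "(\<lambda>j. if Suc k \<le> j \<and> j < n then a j else 0)(k := (if Suc k \<le> k \<and> k < n then a k else 0) + a k)
      = (\<lambda>j. if k \<le> j \<and> j < n then a j else 0)"
    using k by (auto simp: fun_eq_iff)
  show ?case unfolding x_word_step[OF k] word_action_append IH word_action_rep[OF z] e ..
qed

lemma word_action_xi_word:
  "word_action \<theta> (xi_word s) (pol_monom (\<lambda>_. 0, None)) = pol_monom (\<lambda>_. 0, s)"
  by (cases s) (auto simp: xi_word_def mult_xi_def pol_monom_def fun_eq_iff)

lemma fa_symbol_ordered_word:
  assumes "valid_monomial n m"
  shows "fa_symbol \<theta> (fa_word (ordered_word n m)) = pol_monom m"
proof -
  obtain a s where m: "m = (a, s)" by (cases m)
  have a: "(\<lambda>j. if 0 \<le> j \<and> j < n then a j else 0) = a" "(\<lambda>j. if j < n then a j else 0) = a"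
    using assms by (auto simp: m valid_monomial_def fun_eq_iff)
  show ?thesis
    unfolding fa_symbol_def fa_action_fa_word pol_one_eq_pol_monom ordered_word_def m
    by (simp add: word_action_append word_action_xi_word word_action_x_word a)
qed

lemma count_x_word: "k \<le> n \<Longrightarrow> count_list (x_word n k a) (Xg j) = (if k \<le> j \<and> j < n then a j else 0)"
proof (induction "n - k" arbitrary: k)
  case 0
  then show ?case by (simp add: x_word_end)
next
  case (Suc x)
  then have k: "k < n" by simp
  have "count_list (replicate c (Xg k)) (Xg j) = (if j = k then c else 0)" for c
    by (induction c) auto
  then show ?case unfolding x_word_step[OF k] using Suc k by auto
qed

lemma filter_is_xi_x_word: "filter is_xi (x_word n k a) = []"
  by (auto simp: x_word_def filter_empty_conv)

lemma ordered_word_inj: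
  assumes "valid_monomial n m" "valid_monomial n m'" "ordered_word n m = ordered_word n m'"
  shows "m = m'"
proof -
  obtain a s a' s' where m: "m = (a,s)" and m': "m' = (a',s')" by (cases m, cases m')
  have "a j = a' j" for j
  proof (cases "j < n")
    case True
    have "count_list (ordered_word n m) (Xg j) = count_list (ordered_word n m') (Xg j)"
      using assms(3) by simp
    then show ?thesis using True
      by (simp add: m m' ordered_word_def count_x_word xi_word_def split: option.splits)
  next
    case False
    then show ?thesis using assms(1,2) by (simp add: m m' valid_monomial_def)
  qed
  moreover have "filter is_xi (ordered_word n m) = filter is_xi (ordered_word n m')"
    using assms(3) by simp
  then have "s = s'"
    by (simp add: m m' ordered_word_def filter_is_xi_x_word xi_word_def split: option.splits)
  ultimately show ?thesis by (simp add: m m' fun_eq_iff)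
qed

lemma set_ordered_word_subset: "valid_monomial n m \<Longrightarrow> set (ordered_word n m) \<subseteq> gens n"
  by (cases m) (auto simp: ordered_word_def x_word_def xi_word_def valid_monomial_def split: option.splits)

lemma word_deg_ordered_word: "word_deg (ordered_word n m) = (case snd m of None \<Rightarrow> 0 | Some _ \<Rightarrow> 1)"
  by (simp add: word_deg_def ordered_word_def filter_is_xi_x_word[unfolded] xi_word_def split: option.splits)

definition fa_of_pol :: "nat \<Rightarrow> pol \<Rightarrow> gen list \<Rightarrow> real" where
  "fa_of_pol n p w = (if \<exists>m. valid_monomial n m \<and> ordered_word n m = w then p (THE m. valid_monomial n m \<and> ordered_word n m = w) else 0)"

lemma fa_of_pol_ordered_word: "valid_monomial n m \<Longrightarrow> fa_of_pol n p (ordered_word n m) = p m"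
proof -
  assume v: "valid_monomial n m"
  have "(THE m'. valid_monomial n m' \<and> ordered_word n m' = ordered_word n m) = m"
  proof (rule the_equality)
    show "valid_monomial n m \<and> ordered_word n m = ordered_word n m" using v by simp
    fix m' assume "valid_monomial n m' \<and> ordered_word n m' = ordered_word n m"
    then show "m' = m" using ordered_word_inj[of n m' m] v by blast
  qed
  moreover have ex: "\<exists>m'. valid_monomial n m' \<and> ordered_word n m' = ordered_word n m"
    using v by blast
  ultimately show ?thesis unfolding fa_of_pol_def if_P[OF ex] by simp
qed

lemma fa_of_pol_nonzero:
  "fa_of_pol n p w \<noteq> 0 \<Longrightarrow> \<exists>m. valid_monomial n m \<and> ordered_word n m = w \<and> p m \<noteq> 0"
  by (metis fa_of_pol_def fa_of_pol_ordered_word)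

definition pols :: "nat \<Rightarrow> pol set" where
  "pols n = {p. finite (supp p) \<and> (\<forall>m. p m \<noteq> 0 \<longrightarrow> valid_monomial n m)}"

lemma supp_fa_of_pol: "supp (fa_of_pol n p) \<subseteq> ordered_word n ` supp p"
  using fa_of_pol_nonzero by (force simp: supp_def)

lemma FA_fa_of_pol: "p \<in> pols n \<Longrightarrow> fa_of_pol n p \<in> FA n"
proof -
  assume p: "p \<in> pols n"
  have "finite (supp (fa_of_pol n p))"
    by (rule finite_subset[OF supp_fa_of_pol]) (use p in \<open>simp add: pols_def\<close>)
  moreover have "set w \<subseteq> gens n" if "fa_of_pol n p w \<noteq> 0" for w
    using fa_of_pol_nonzero[OF that] set_ordered_word_subset by blast
  ultimately show ?thesis by (simp add: FA_iff)
qed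

lemma fa_of_pol_pol_monom:
  "valid_monomial n m \<Longrightarrow> fa_of_pol n (pol_monom m) = fa_word (ordered_word n m)"
proof (rule ext)
  fix w assume v: "valid_monomial n m"
  show "fa_of_pol n (pol_monom m) w = fa_word (ordered_word n m) w"
  proof (cases "\<exists>m'. valid_monomial n m' \<and> ordered_word n m' = w")
    case True
    then obtain m' where "valid_monomial n m'" "ordered_word n m' = w" by blast
    then show ?thesis using v ordered_word_inj[of n m m'] by (auto simp: fa_of_pol_ordered_word pol_monom_def fa_word_def)
  next
    case False
    then have "w \<noteq> ordered_word n m" using v by blast
    then show ?thesis unfolding fa_of_pol_def if_not_P[OF False] by (simp add: fa_word_def)
  qed
qed

lemma fa_symbol_fa_of_pol:
  assumes "p \<in> pols n"
  shows "fa_symbol \<theta> (fa_of_pol n p) = p"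
proof (rule ext)
  fix m'
  have fin: "finite (supp p)" and val: "\<And>m. m \<in> supp p \<Longrightarrow> valid_monomial n m"
    using assms by (auto simp: pols_def supp_def)
  have inj: "inj_on (ordered_word n) (supp p)" using ordered_word_inj val by (meson inj_onI)
  have "fa_symbol \<theta> (fa_of_pol n p) m' = (\<Sum>w\<in>ordered_word n ` supp p. fa_of_pol n p w * word_action \<theta> w pol_one m')"
    unfolding fa_symbol_def using fa_action_superset[OF _ supp_fa_of_pol] fin by simp
  also have "\<dots> = (\<Sum>m\<in>supp p. p m * pol_monom m m')"
    unfolding sum.reindex[OF inj] using val
    by (intro sum.cong) (auto simp: fa_of_pol_ordered_word fa_symbol_ordered_word[unfolded fa_symbol_def fa_action_fa_word])
  also have "\<dots> = (\<Sum>m\<in>supp p. if m = m' then p m else 0)"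
    by (rule sum.cong) (auto simp: pol_monom_def)
  also have "\<dots> = p m'"
    using fin by (simp add: sum.delta supp_def)
  finally show "fa_symbol \<theta> (fa_of_pol n p) m' = p m'" .
qed

lemma pols_iff: "p \<in> pols n \<longleftrightarrow> finite (supp p) \<and> (\<forall>m. p m \<noteq> 0 \<longrightarrow> valid_monomial n m)"
  by (simp add: pols_def)

lemma pols_lincomb:
  assumes "finite K" "\<And>k. k \<in> K \<Longrightarrow> F k \<in> pols n"
  shows "(\<lambda>m. \<Sum>k\<in>K. c k * F k m) \<in> pols n"
proof -
  have "finite (supp (\<lambda>m. \<Sum>k\<in>K. c k * F k m))"
    by (rule finite_subset[OF supp_lincomb]) (use assms in \<open>auto simp: pols_iff\<close>)
  moreover have "valid_monomial n m" if nz: "(\<Sum>k\<in>K. c k * F k m) \<noteq> 0" for m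
  proof -
    obtain k where "k \<in> K" "c k * F k m \<noteq> 0"
      using nz by (meson sum.not_neutral_contains_not_neutral)
    then have "F k m \<noteq> 0" by simp
    then show ?thesis using assms(2)[of k] \<open>k \<in> K\<close> unfolding pols_def by blast
  qed
  ultimately show ?thesis unfolding pols_def by blast
qed

lemma pols_add: "p \<in> pols n \<Longrightarrow> q \<in> pols n \<Longrightarrow> (\<lambda>m. p m + q m) \<in> pols n"
proof -
  assume p: "p \<in> pols n" and q: "q \<in> pols n"
  have "finite (supp (\<lambda>m. p m + q m))"
    by (rule finite_subset[of _ "supp p \<union> supp q"]) (use p q in \<open>auto simp: pols_iff supp_def\<close>)
  moreover have "valid_monomial n m" if "p m + q m \<noteq> 0" for m
  proof -
    have "p m \<noteq> 0 \<or> q m \<noteq> 0" using that by auto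
    then show ?thesis using p q unfolding pols_def by blast
  qed
  ultimately show ?thesis unfolding pols_def by blast
qed

lemma pols_smult: "p \<in> pols n \<Longrightarrow> (\<lambda>m. c * p m) \<in> pols n"
proof -
  assume p: "p \<in> pols n"
  have "finite (supp (\<lambda>m. c * p m))"
    by (rule finite_subset[of _ "supp p"]) (use p in \<open>auto simp: pols_iff supp_def\<close>)
  then show ?thesis using p by (auto simp: pols_iff)
qed

lemma pols_zero: "(\<lambda>m. 0) \<in> pols n"
  by (simp add: pols_iff supp_def)

lemma pols_mult_x: "p \<in> pols n \<Longrightarrow> i < n \<Longrightarrow> mult_x i p \<in> pols n"
proof -
  assume p: "p \<in> pols n" and i: "i < n"
  have "supp (mult_x i p) \<subseteq> (\<lambda>(a,s). (a(i := Suc (a i)), s)) ` supp p"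
  proof (clarify)
    fix a s assume "(a,s) \<in> supp (mult_x i p)"
    then have h: "a i \<noteq> 0" "p (a(i := a i - 1), s) \<noteq> 0"
      by (auto simp: supp_def mult_x_def split: if_splits)
    then show "(a,s) \<in> (\<lambda>(a,s). (a(i := Suc (a i)), s)) ` supp p"
      by (intro image_eqI[of _ _ "(a(i := a i - 1), s)"]) (auto simp: supp_def fun_eq_iff)
  qed
  then have "finite (supp (mult_x i p))" by (rule finite_subset) (use p in \<open>simp add: pols_iff\<close>)
  moreover have "valid_monomial n (a,s)" if "mult_x i p (a,s) \<noteq> 0" for a s
  proof -
    have h: "a i \<noteq> 0" "p (a(i := a i - 1), s) \<noteq> 0"
      using that by (auto simp: mult_x_def split: if_splits)
    then have "valid_monomial n (a(i := a i - 1), s)" using p by (simp add: pols_iff)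
    then show ?thesis using i by (auto simp: valid_monomial_def)
  qed
  ultimately show ?thesis by (auto simp: pols_iff)
qed

lemma pols_deriv_x: "p \<in> pols n \<Longrightarrow> deriv_x j p \<in> pols n"
proof -
  assume p: "p \<in> pols n"
  have "supp (deriv_x j p) \<subseteq> (\<lambda>(a,s). (a(j := a j - 1), s)) ` supp p"
  proof (clarify)
    fix a s assume "(a,s) \<in> supp (deriv_x j p)"
    then have h: "p (a(j := a j + 1), s) \<noteq> 0" by (auto simp: supp_def deriv_x_def)
    then show "(a,s) \<in> (\<lambda>(a,s). (a(j := a j - 1), s)) ` supp p"
      by (intro image_eqI[of _ _ "(a(j := a j + 1), s)"]) (auto simp: supp_def fun_eq_iff)
  qed
  then have "finite (supp (deriv_x j p))" by (rule finite_subset) (use p in \<open>simp add: pols_iff\<close>)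
  moreover have "valid_monomial n (a,s)" if "deriv_x j p (a,s) \<noteq> 0" for a s
  proof -
    have h: "p (a(j := a j + 1), s) \<noteq> 0" using that by (auto simp: deriv_x_def)
    then have v: "valid_monomial n (a(j := a j + 1), s)" using p by (simp add: pols_iff)
    show ?thesis
    proof (cases "j < n")
      case True then show ?thesis using v by (auto simp: valid_monomial_def)
    next
      case False then show ?thesis using v by (auto simp: valid_monomial_def dest: spec[of _ j])
    qed
  qed
  ultimately show ?thesis by (auto simp: pols_iff)
qed

lemma pols_mult_xi: "p \<in> pols n \<Longrightarrow> i < n \<Longrightarrow> mult_xi i p \<in> pols n"
proof -
  assume p: "p \<in> pols n" and i: "i < n"
  have "supp (mult_xi i p) \<subseteq> (\<lambda>(a,s). (a, Some i)) ` supp p"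
    by (auto simp: supp_def mult_xi_def split: if_splits)
  then have "finite (supp (mult_xi i p))" by (rule finite_subset) (use p in \<open>simp add: pols_iff\<close>)
  moreover have "valid_monomial n (a,s)" if "mult_xi i p (a,s) \<noteq> 0" for a s
  proof -
    have "s = Some i" "p (a, None) \<noteq> 0" using that by (auto simp: mult_xi_def split: if_splits)
    then show ?thesis using p i by (auto simp: pols_iff valid_monomial_def)
  qed
  ultimately show ?thesis by (auto simp: pols_iff)
qed

lemma pols_star_x: "p \<in> pols n \<Longrightarrow> i < n \<Longrightarrow> star_x \<theta> i p \<in> pols n"
  unfolding star_x_def
  by (intro pols_add pols_mult_x pols_lincomb pols_deriv_x) auto

lemma pols_word_action: "p \<in> pols n \<Longrightarrow> set w \<subseteq> gens n \<Longrightarrow> word_action \<theta> w p \<in> pols n"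
proof (induction w)
  case Nil then show ?case by simp
next
  case (Cons a w)
  then show ?case by (cases a) (auto intro: pols_star_x pols_mult_xi)
qed

lemma pols_pol_one: "pol_one \<in> pols n"
proof -
  have "supp pol_one \<subseteq> {(\<lambda>_. 0, None)}" by (auto simp: supp_def pol_one_def split: if_splits)
  then show ?thesis by (auto simp: pols_iff pol_one_def valid_monomial_def finite_subset split: if_splits)
qed

lemma pols_fa_symbol: "f \<in> FA n \<Longrightarrow> fa_symbol \<theta> f \<in> pols n"
  unfolding fa_symbol_def fa_action_def
  by (rule pols_lincomb) (auto simp: FA_iff supp_def intro!: pols_word_action pols_pol_one)

lemma fa_symbol_add:
  "f \<in> FA n \<Longrightarrow> g \<in> FA n \<Longrightarrow> fa_symbol \<theta> (fa_add f g) = (\<lambda>m. fa_symbol \<theta> f m + fa_symbol \<theta> g m)"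
  by (simp add: fa_symbol_def fa_action_add FA_finite_supp)

lemma fa_symbol_sub:
  "f \<in> FA n \<Longrightarrow> g \<in> FA n \<Longrightarrow> fa_symbol \<theta> (fa_sub f g) = (\<lambda>m. fa_symbol \<theta> f m - fa_symbol \<theta> g m)"
  by (simp add: fa_symbol_def fa_action_sub FA_finite_supp)

lemma fa_symbol_smult: "f \<in> FA n \<Longrightarrow> fa_symbol \<theta> (fa_smult c f) = (\<lambda>m. c * fa_symbol \<theta> f m)"
  by (simp add: fa_symbol_def fa_action_smult FA_finite_supp)

lemma fa_symbol_zero: "fa_symbol \<theta> fa_zero = (\<lambda>m. 0)"
  by (simp add: fa_symbol_def fa_action_zero)

lemma fa_of_pol_add: "fa_of_pol n (\<lambda>m. p m + q m) = fa_add (fa_of_pol n p) (fa_of_pol n q)"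
  by (auto simp: fa_of_pol_def fa_add_def fun_eq_iff)

lemma fa_of_pol_smult: "fa_of_pol n (\<lambda>m. c * p m) = fa_smult c (fa_of_pol n p)"
  by (auto simp: fa_of_pol_def fa_smult_def fun_eq_iff)

lemma fa_of_pol_zero: "fa_of_pol n (\<lambda>m. 0) = fa_zero"
  by (auto simp: fa_of_pol_def fa_zero_def fun_eq_iff)

definition gen_key :: "nat \<Rightarrow> gen \<Rightarrow> nat" where
  "gen_key n a = (case a of Xg i \<Rightarrow> i | Eg i \<Rightarrow> n)"

fun inv_weight :: "nat \<Rightarrow> nat \<Rightarrow> gen list \<Rightarrow> nat" where
  "inv_weight n k [] = 0"
| "inv_weight n k (a # w) = k * gen_key n a + inv_weight n (Suc k) w"

lemma inv_weight_append: "inv_weight n k (u @ x) = inv_weight n k u + inv_weight n (k + length u) x"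
  by (induction u arbitrary: k) auto

lemma gen_key_le: "a \<in> gens n \<Longrightarrow> gen_key n a \<le> n"
  by (auto simp: gens_def gen_key_def)

lemma inv_weight_bound: "set w \<subseteq> gens n \<Longrightarrow> inv_weight n k w \<le> (k + length w) * length w * n"
proof (induction w arbitrary: k)
  case Nil then show ?case by simp
next
  case (Cons a w)
  let ?l = "length w"
  have "k * gen_key n a \<le> k * n" using gen_key_le Cons.prems by auto
  moreover have "inv_weight n (Suc k) w \<le> (Suc k + ?l) * ?l * n"
    using Cons.IH[of "Suc k"] Cons.prems by auto
  ultimately have "k * gen_key n a + inv_weight n (Suc k) w \<le> k * n + (Suc k + ?l) * ?l * n"
    by (rule add_mono)
  then have "inv_weight n k (a # w) \<le> k * n + (Suc k + ?l) * ?l * n" by simp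
  also have "k * n \<le> (Suc k + ?l) * n" by (rule mult_le_mono1) simp
  then have "k * n + (Suc k + ?l) * ?l * n \<le> (Suc k + ?l) * n + (Suc k + ?l) * ?l * n" by simp
  also have "(Suc k + ?l) * n + (Suc k + ?l) * ?l * n = (k + length (a # w)) * length (a # w) * n"
    by (simp add: algebra_simps)
  finally show ?case .
qed

lemma inv_weight_swap:
  "inv_weight n 0 (u @ [a,b] @ v) + gen_key n a = inv_weight n 0 (u @ [b,a] @ v) + gen_key n b"
  by (simp add: inv_weight_append algebra_simps)

definition normal_word :: "nat \<Rightarrow> gen list \<Rightarrow> bool" where
  "normal_word n w \<longleftrightarrow> \<not> (\<exists>u a b v. w = u @ [a,b] @ v \<and> (gen_key n b < gen_key n a \<or> (is_xi a \<and> is_xi b)))"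

lemma normal_word_Cons: "normal_word n (c # w) \<Longrightarrow> normal_word n w"
  unfolding normal_word_def by (metis append_Cons)

lemma normal_word_Cons_Cons:
  "normal_word n (c # d # w) \<Longrightarrow> gen_key n c \<le> gen_key n d \<and> \<not> (is_xi c \<and> is_xi d)"
  unfolding normal_word_def by (metis append_Cons append_Nil not_less)

lemma normal_word_sorted: "normal_word n w \<Longrightarrow> sorted (map (gen_key n) w)"
proof (induction w)
  case Nil then show ?case by simp
next
  case (Cons c w)
  have s: "sorted (map (gen_key n) w)" using Cons normal_word_Cons by blast
  show ?case
  proof (cases w)
    case Nil then show ?thesis by simp
  next
    case (Cons d w')
    have cd: "gen_key n c \<le> gen_key n d"
      using normal_word_Cons_Cons[of n c d w'] Cons.prems Cons by simp
    have "\<forall>x\<in>set w'. gen_key n d \<le> gen_key n x" using s Cons by simp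
    then have "\<forall>x\<in>set w'. gen_key n c \<le> gen_key n x" using cd by (auto intro: order_trans)
    then show ?thesis using s cd Cons by simp
  qed
qed

lemma x_word_cong: "(\<And>i. k \<le> i \<Longrightarrow> i < n \<Longrightarrow> a i = b i) \<Longrightarrow> x_word n k a = x_word n k b"
  unfolding x_word_def by (rule arg_cong[of _ _ concat]) (rule map_cong; auto)

lemma x_word_skip: "k \<le> j \<Longrightarrow> j \<le> n \<Longrightarrow> (\<And>i. k \<le> i \<Longrightarrow> i < j \<Longrightarrow> a i = 0) \<Longrightarrow> x_word n k a = x_word n j a"
proof (induction "j - k" arbitrary: k)
  case 0 then show ?case by simp
next
  case (Suc x)
  then have k: "k < n" "k < j" by auto
  have "x_word n k a = replicate (a k) (Xg k) @ x_word n (Suc k) a" by (rule x_word_step[OF k(1)])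
  also have "a k = 0" using Suc.prems k by auto
  also have "x_word n (Suc k) a = x_word n j a" using Suc k by auto
  finally show ?case by simp
qed

lemma x_word_cons: "j < n \<Longrightarrow> Xg j # x_word n j a = x_word n j (a(j := Suc (a j)))"
proof -
  assume j: "j < n"
  have "x_word n (Suc j) (a(j := Suc (a j))) = x_word n (Suc j) a" by (rule x_word_cong) auto
  then show ?thesis using x_word_step[OF j, of a] x_word_step[OF j, of "a(j := Suc (a j))"] by simp
qed

lemma x_word_zero: "x_word n k (\<lambda>_. 0) = []"
  by (simp add: x_word_def)

lemma gen_key_ge_n: "y \<in> gens n \<Longrightarrow> n \<le> gen_key n y \<Longrightarrow> is_xi y"
  by (auto simp: gens_def gen_key_def)

lemma normal_word_shape:
  "set w \<subseteq> gens n \<Longrightarrow> normal_word n w \<Longrightarrow> (\<forall>y\<in>set w. k \<le> gen_key n y) \<Longrightarrow> k \<le> n \<Longrightarrow>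
   \<exists>a s. valid_monomial n (a,s) \<and> (\<forall>j<k. a j = 0) \<and> w = x_word n k a @ xi_word s"
proof (induction w arbitrary: k)
  case Nil
  show ?case
    by (rule exI[of _ "\<lambda>_. 0"], rule exI[of _ None]) (simp add: valid_monomial_def x_word_zero xi_word_def)
next
  case (Cons c w)
  have sw: "set w \<subseteq> gens n" and nw: "normal_word n w" using Cons.prems normal_word_Cons by auto
  have srt: "\<forall>y\<in>set w. gen_key n c \<le> gen_key n y" using normal_word_sorted[OF Cons.prems(2)] by simp
  show ?case
  proof (cases c)
    case (Xg j)
    have j: "j < n" "k \<le> j" using Cons.prems Xg by (auto simp: gen_key_def)
    have kc: "gen_key n c = j" by (simp add: Xg gen_key_def)
    obtain a s where as: "valid_monomial n (a,s)" "\<forall>i<j. a i = 0" "w = x_word n j a @ xi_word s"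
      using Cons.IH[OF sw nw, of j] srt kc j by auto
    define a' where "a' = a(j := Suc (a j))"
    have "c # w = x_word n j a' @ xi_word s"
      using as(3) x_word_cons[OF j(1)] Xg by (simp add: a'_def)
    also have "x_word n j a' = x_word n k a'"
      by (rule x_word_skip[symmetric]) (use j as(2) in \<open>auto simp: a'_def\<close>)
    finally have e: "c # w = x_word n k a' @ xi_word s" .
    have v: "valid_monomial n (a', s)" using as(1) j by (auto simp: valid_monomial_def a'_def)
    have z: "\<forall>i<k. a' i = 0" using as(2) j by (auto simp: a'_def)
    show ?thesis using e v z by blast
  next
    case (Eg j)
    have j: "j < n" using Cons.prems Eg by auto
    have "w = []"
    proof (cases w)
      case (Cons d w')
      have "n \<le> gen_key n d" using srt Cons Eg by (auto simp: gen_key_def)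
      then have "is_xi d" using gen_key_ge_n sw Cons by auto
      then show ?thesis using normal_word_Cons_Cons[of n c d w'] Cons.prems(2) \<open>w = d # w'\<close> Eg by simp
    qed simp
    then show ?thesis
      by (intro exI[of _ "\<lambda>_. 0"] exI[of _ "Some j"]) (simp add: Eg valid_monomial_def x_word_zero xi_word_def j)
  qed
qed

lemma normal_word_eq_ordered_word:
  "set w \<subseteq> gens n \<Longrightarrow> normal_word n w \<Longrightarrow> \<exists>m. valid_monomial n m \<and> w = ordered_word n m"
  using normal_word_shape[of w n 0] by (force simp: ordered_word_def)


section \<open>Straightening\<close>

locale theta_algebra =
  fixes n :: nat and \<theta> :: "nat \<Rightarrow> nat \<Rightarrow> real"
  assumes antisymmetric: "antisymmetric_matrix n \<theta>"

lemma fa_symbol_A_ideal: "antisymmetric_matrix n \<theta> \<Longrightarrow> f \<in> A_ideal n \<theta> \<Longrightarrow> fa_symbol \<theta> f = (\<lambda>m. 0)"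
  by (simp add: fa_symbol_def fa_action_A_ideal)

lemma fa_symbol_eq_if_A_ideal:
  assumes "antisymmetric_matrix n \<theta>" "f \<in> FA n" "g \<in> FA n" "fa_sub f g \<in> A_ideal n \<theta>"
  shows "fa_symbol \<theta> f = fa_symbol \<theta> g"
proof -
  have "fa_symbol \<theta> (fa_sub f g) = (\<lambda>m. 0)" using fa_symbol_A_ideal[OF assms(1,4)] .
  then show ?thesis using fa_symbol_sub[OF assms(2,3), of \<theta>] by (auto simp: fun_eq_iff dest: fun_cong)
qed

lemma fa_mult_fa_word_fa_word: "fa_mult (fa_word u) (fa_word v) = fa_word (u @ v)"
proof (rule ext)
  fix x
  show "fa_mult (fa_word u) (fa_word v) x = fa_word (u @ v) x"
    unfolding fa_mult_fa_word_left by (auto simp: fa_word_def) (metis append_take_drop_id)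
qed

lemma fa_mult_sub_right: "fa_mult f (fa_sub g h) = fa_sub (fa_mult f g) (fa_mult f h)"
  by (simp add: fa_mult_def fa_sub_def fun_eq_iff algebra_simps sum_subtractf)

lemma fa_mult_sub_left: "fa_mult (fa_sub g h) f = fa_sub (fa_mult g f) (fa_mult h f)"
  by (simp add: fa_mult_def fa_sub_def fun_eq_iff algebra_simps sum_subtractf)

lemma fa_mult_smult_right: "fa_mult f (fa_smult c g) = fa_smult c (fa_mult f g)"
  by (simp add: fa_mult_def fa_smult_def fun_eq_iff algebra_simps sum_distrib_left)

lemma fa_mult_smult_left: "fa_mult (fa_smult c g) f = fa_smult c (fa_mult g f)"
  by (simp add: fa_mult_def fa_smult_def fun_eq_iff algebra_simps sum_distrib_left)

definition normalizable :: "nat \<Rightarrow> (nat \<Rightarrow> nat \<Rightarrow> real) \<Rightarrow> (gen list \<Rightarrow> real) set" where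
  "normalizable n \<theta> = {f \<in> FA n. fa_sub f (fa_of_pol n (fa_symbol \<theta> f)) \<in> A_ideal n \<theta>}"

context theta_algebra
begin

lemma normalizable_equiv:
  assumes "f \<in> FA n" "g \<in> normalizable n \<theta>" "fa_sub f g \<in> A_ideal n \<theta>"
  shows "f \<in> normalizable n \<theta>"
proof -
  have g: "g \<in> FA n" "fa_sub g (fa_of_pol n (fa_symbol \<theta> g)) \<in> A_ideal n \<theta>"
    using assms(2) by (auto simp: normalizable_def)
  have L: "fa_symbol \<theta> f = fa_symbol \<theta> g"
    by (rule fa_symbol_eq_if_A_ideal[OF antisymmetric assms(1) g(1) assms(3)])
  have "fa_sub f (fa_of_pol n (fa_symbol \<theta> f)) = fa_add (fa_sub f g) (fa_sub g (fa_of_pol n (fa_symbol \<theta> g)))"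
    by (simp add: L fa_sub_def fa_add_def fun_eq_iff)
  then show ?thesis using assms(1,3) g(2) by (auto simp: normalizable_def intro: A_ideal.add)
qed

lemma normalizable_add:
  "f \<in> normalizable n \<theta> \<Longrightarrow> g \<in> normalizable n \<theta> \<Longrightarrow> fa_add f g \<in> normalizable n \<theta>"
proof -
  assume f: "f \<in> normalizable n \<theta>" and g: "g \<in> normalizable n \<theta>"
  have F: "f \<in> FA n" "g \<in> FA n" using f g by (auto simp: normalizable_def)
  have "fa_sub (fa_add f g) (fa_of_pol n (fa_symbol \<theta> (fa_add f g))) =
      fa_add (fa_sub f (fa_of_pol n (fa_symbol \<theta> f))) (fa_sub g (fa_of_pol n (fa_symbol \<theta> g)))"
    unfolding fa_symbol_add[OF F] fa_of_pol_add by (simp add: fa_sub_def fa_add_def fun_eq_iff)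
  then show ?thesis using f g F by (auto simp: normalizable_def intro: A_ideal.add FA_add)
qed

lemma normalizable_smult: "f \<in> normalizable n \<theta> \<Longrightarrow> fa_smult c f \<in> normalizable n \<theta>"
proof -
  assume f: "f \<in> normalizable n \<theta>"
  have F: "f \<in> FA n" using f by (auto simp: normalizable_def)
  have "fa_sub (fa_smult c f) (fa_of_pol n (fa_symbol \<theta> (fa_smult c f))) = fa_smult c (fa_sub f (fa_of_pol n (fa_symbol \<theta> f)))"
    unfolding fa_symbol_smult[OF F] fa_of_pol_smult by (simp add: fa_sub_def fa_smult_def fun_eq_iff algebra_simps)
  then show ?thesis using f F by (auto simp: normalizable_def intro: A_ideal.smult FA_smult)
qed

lemma normalizable_zero: "fa_zero \<in> normalizable n \<theta>"
proof -
  have "fa_sub fa_zero (fa_of_pol n (fa_symbol \<theta> fa_zero)) = fa_zero"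
    unfolding fa_symbol_zero fa_of_pol_zero by (simp add: fa_sub_def fa_zero_def)
  then show ?thesis by (simp add: normalizable_def FA_zero A_ideal.zero)
qed

lemma normalizable_lincomb:
  assumes "finite K" "\<And>k. k \<in> K \<Longrightarrow> F k \<in> normalizable n \<theta>"
  shows "(\<lambda>v. \<Sum>k\<in>K. c k * F k v) \<in> normalizable n \<theta>"
  using assms
proof (induction K rule: finite_induct)
  case empty
  then show ?case using normalizable_zero by (simp add: fa_zero_def)
next
  case (insert x K)
  have "(\<lambda>v. \<Sum>k\<in>insert x K. c k * F k v) = fa_add (fa_smult (c x) (F x)) (\<lambda>v. \<Sum>k\<in>K. c k * F k v)"
    using insert by (simp add: fa_add_def fa_smult_def fun_eq_iff)
  then show ?case using insert by (auto intro!: normalizable_add normalizable_smult)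
qed

lemma normalizable_ordered_word:
  "valid_monomial n m \<Longrightarrow> fa_word (ordered_word n m) \<in> normalizable n \<theta>"
proof -
  assume v: "valid_monomial n m"
  have "fa_sub (fa_word (ordered_word n m)) (fa_of_pol n (fa_symbol \<theta> (fa_word (ordered_word n m)))) = fa_zero"
    by (simp add: fa_symbol_ordered_word[OF v] fa_of_pol_pol_monom[OF v] fa_sub_def fa_zero_def)
  then show ?thesis using v by (simp add: normalizable_def FA_fa_word set_ordered_word_subset A_ideal.zero)
qed

lemma A_ideal_sandwich:
  "r \<in> A_rels n \<theta> \<Longrightarrow> set u \<subseteq> gens n \<Longrightarrow> set v \<subseteq> gens n \<Longrightarrow>
   fa_mult (fa_mult (fa_word u) r) (fa_word v) \<in> A_ideal n \<theta>"
  by (intro A_ideal.rmult A_ideal.lmult A_ideal.rel FA_fa_word)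

lemma fa_word_sandwich:
  "fa_mult (fa_mult (fa_word u) (fa_mult (fa_gen c) (fa_gen d))) (fa_word v) = fa_word (u @ [c, d] @ v)"
  by (simp add: fa_gen_eq_fa_word fa_mult_fa_word_fa_word)

lemma normalizable_swap_x_x:
  assumes gens: "set (u @ [Xg j, Xg i] @ v) \<subseteq> gens n"
    and swapped: "fa_word (u @ [Xg i, Xg j] @ v) \<in> normalizable n \<theta>"
    and shorter: "fa_word (u @ v) \<in> normalizable n \<theta>"
  shows "fa_word (u @ [Xg j, Xg i] @ v) \<in> normalizable n \<theta>"
proof -
  let ?w = "fa_word (u @ [Xg j, Xg i] @ v)" and ?sw = "fa_word (u @ [Xg i, Xg j] @ v)"
  let ?r = "fa_sub (fa_sub (fa_mult (fa_gen (Xg j)) (fa_gen (Xg i)))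
    (fa_mult (fa_gen (Xg i)) (fa_gen (Xg j)))) (fa_smult (\<theta> j i) fa_one)"
  have "i < n" "j < n" using gens by auto
  then have "?r \<in> A_rels n \<theta>" unfolding A_rels_def by blast
  moreover have "fa_mult (fa_mult (fa_word u) ?r) (fa_word v)
      = fa_sub ?w (fa_add ?sw (fa_smult (\<theta> j i) (fa_word (u @ v))))"
    unfolding fa_mult_sub_right fa_mult_sub_left fa_mult_smult_right fa_mult_smult_left fa_word_sandwich
    by (simp add: fa_one_eq_fa_word fa_mult_fa_word_fa_word fa_sub_def fa_add_def fa_smult_def fun_eq_iff)
  ultimately have "fa_sub ?w (fa_add ?sw (fa_smult (\<theta> j i) (fa_word (u @ v)))) \<in> A_ideal n \<theta>"
    using A_ideal_sandwich[of ?r u v] gens by simp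
  moreover have "fa_add ?sw (fa_smult (\<theta> j i) (fa_word (u @ v))) \<in> normalizable n \<theta>"
    using swapped shorter by (intro normalizable_add normalizable_smult)
  ultimately show ?thesis by (intro normalizable_equiv[OF FA_fa_word[OF gens]])
qed

lemma normalizable_swap_xi_x:
  assumes gens: "set (u @ [Eg j, Xg i] @ v) \<subseteq> gens n"
    and swapped: "fa_word (u @ [Xg i, Eg j] @ v) \<in> normalizable n \<theta>"
  shows "fa_word (u @ [Eg j, Xg i] @ v) \<in> normalizable n \<theta>"
proof -
  let ?w = "fa_word (u @ [Eg j, Xg i] @ v)" and ?sw = "fa_word (u @ [Xg i, Eg j] @ v)"
  let ?r = "fa_sub (fa_mult (fa_gen (Xg i)) (fa_gen (Eg j))) (fa_mult (fa_gen (Eg j)) (fa_gen (Xg i)))"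
  have "i < n" "j < n" using gens by auto
  then have "?r \<in> A_rels n \<theta>" unfolding A_rels_def by blast
  moreover have "fa_smult (-1) (fa_mult (fa_mult (fa_word u) ?r) (fa_word v)) = fa_sub ?w ?sw"
    unfolding fa_mult_sub_right fa_mult_sub_left fa_word_sandwich
    by (simp add: fa_sub_def fa_smult_def fun_eq_iff)
  ultimately have "fa_sub ?w ?sw \<in> A_ideal n \<theta>"
    using A_ideal.smult[OF A_ideal_sandwich[of ?r u v], of "-1"] gens by simp
  then show ?thesis by (rule normalizable_equiv[OF FA_fa_word[OF gens] swapped])
qed

lemma normalizable_xi_xi:
  assumes gens: "set (u @ [Eg j, Eg i] @ v) \<subseteq> gens n"
  shows "fa_word (u @ [Eg j, Eg i] @ v) \<in> normalizable n \<theta>"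
proof -
  have "i < n" "j < n" using gens by auto
  then have "fa_mult (fa_gen (Eg j)) (fa_gen (Eg i)) \<in> A_rels n \<theta>" unfolding A_rels_def by blast
  then have "fa_mult (fa_mult (fa_word u) (fa_mult (fa_gen (Eg j)) (fa_gen (Eg i)))) (fa_word v) \<in> A_ideal n \<theta>"
    by (rule A_ideal_sandwich) (use gens in auto)
  then have "fa_sub (fa_word (u @ [Eg j, Eg i] @ v)) fa_zero \<in> A_ideal n \<theta>"
    by (simp add: fa_word_sandwich fa_sub_def fa_zero_def)
  then show ?thesis by (rule normalizable_equiv[OF FA_fa_word[OF gens] normalizable_zero])
qed

lemma fa_word_normalizable_swap:
  assumes gens: "set (u @ [a, b] @ v) \<subseteq> gens n"
    and bad: "gen_key n b < gen_key n a \<or> is_xi a \<and> is_xi b"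
    and swapped: "gen_key n b < gen_key n a \<Longrightarrow> fa_word (u @ [b, a] @ v) \<in> normalizable n \<theta>"
    and shorter: "fa_word (u @ v) \<in> normalizable n \<theta>"
  shows "fa_word (u @ [a, b] @ v) \<in> normalizable n \<theta>"
proof -
  consider (x_x) i j where "a = Xg j" "b = Xg i" "i < j"
    | (xi_x) i j where "a = Eg j" "b = Xg i"
    | (xi_xi) i j where "a = Eg j" "b = Eg i"
    using bad gens by (cases a; cases b) (auto simp: gen_key_def)
  then show ?thesis
  proof cases
    case x_x
    have "set (u @ [Xg j, Xg i] @ v) \<subseteq> gens n" using gens x_x by simp
    moreover have "fa_word (u @ [Xg i, Xg j] @ v) \<in> normalizable n \<theta>"
      using swapped x_x by (simp add: gen_key_def)
    ultimately show ?thesis unfolding x_x(1,2) by (rule normalizable_swap_x_x[OF _ _ shorter])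
  next
    case xi_x
    have "set (u @ [Eg j, Xg i] @ v) \<subseteq> gens n" using gens xi_x by simp
    moreover have "fa_word (u @ [Xg i, Eg j] @ v) \<in> normalizable n \<theta>"
      using swapped gens xi_x by (simp add: gen_key_def)
    ultimately show ?thesis unfolding xi_x by (rule normalizable_swap_xi_x)
  next
    case xi_xi
    then show ?thesis using normalizable_xi_xi[of u j i v] gens by simp
  qed
qed

text \<open>Induction on the length of the word and, for fixed length, on the bounded weight: swapping an
  out-of-order adjacent pair raises the weight and, by the relations, costs at most a multiple of
  the shorter word with the pair deleted, while two adjacent xi's make the word vanish.\<close>

lemma fa_word_normalizable: "set w \<subseteq> gens n \<Longrightarrow> fa_word w \<in> normalizable n \<theta>"
proof (induction "length w" arbitrary: w rule: less_induct)
  case less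
  note shorter = less.hyps
  let ?B = "length w * length w * n"
  have "fa_word w' \<in> normalizable n \<theta>" if "set w' \<subseteq> gens n" "length w' = length w" for w'
    using that
  proof (induction "?B - inv_weight n 0 w'" arbitrary: w' rule: less_induct)
    case less
    show ?case
    proof (cases "normal_word n w'")
      case True
      then show ?thesis
        using normal_word_eq_ordered_word less.prems normalizable_ordered_word by blast
    next
      case False
      then obtain u a b v where w': "w' = u @ [a, b] @ v"
        and bad: "gen_key n b < gen_key n a \<or> is_xi a \<and> is_xi b"
        unfolding normal_word_def by blast
      have gens: "set (u @ [a, b] @ v) \<subseteq> gens n" using less.prems w' by simp
      show ?thesis unfolding w'
      proof (rule fa_word_normalizable_swap[OF gens bad])
        show "fa_word (u @ v) \<in> normalizable n \<theta>"
          using shorter[of "u @ v"] gens less.prems w' by simp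
        assume "gen_key n b < gen_key n a"
        then have "inv_weight n 0 w' < inv_weight n 0 (u @ [b, a] @ v)"
          using inv_weight_swap[of n u a b v] w' by simp
        moreover have "inv_weight n 0 (u @ [b, a] @ v) \<le> ?B"
        proof -
          have "set (u @ [b, a] @ v) \<subseteq> gens n" "length (u @ [b, a] @ v) = length w"
            using gens less.prems w' by auto
          then show ?thesis using inv_weight_bound[of "u @ [b, a] @ v" n 0] by simp
        qed
        ultimately show "fa_word (u @ [b, a] @ v) \<in> normalizable n \<theta>"
          using less.hyps[of "u @ [b, a] @ v"] gens less.prems w' by simp
      qed
    qed
  qed
  then show ?case using less.prems by simp
qed

lemma FA_normalizable: "f \<in> FA n \<Longrightarrow> f \<in> normalizable n \<theta>"
proof -
  assume f: "f \<in> FA n"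
  have "f = (\<lambda>w. \<Sum>u\<in>supp f. f u * fa_word u w)" by (rule fa_decomp) (use f FA_finite_supp in auto)
  also have "\<dots> \<in> normalizable n \<theta>"
  proof (rule normalizable_lincomb)
    show "finite (supp f)" using f by (rule FA_finite_supp)
    fix u assume "u \<in> supp f"
    then have "set u \<subseteq> gens n" using f by (auto simp: FA_iff supp_def)
    then show "fa_word u \<in> normalizable n \<theta>" by (rule fa_word_normalizable)
  qed
  finally show ?thesis .
qed

lemma A_ideal_iff_fa_symbol_eq_0: "f \<in> FA n \<Longrightarrow> f \<in> A_ideal n \<theta> \<longleftrightarrow> fa_symbol \<theta> f = (\<lambda>m. 0)"
proof
  assume f: "f \<in> FA n" and "fa_symbol \<theta> f = (\<lambda>m. 0)"
  then have "fa_sub f (fa_of_pol n (fa_symbol \<theta> f)) = f"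
    by (simp add: fa_of_pol_zero fa_sub_def fa_zero_def)
  then show "f \<in> A_ideal n \<theta>" using FA_normalizable[OF f] by (simp add: normalizable_def)
qed (rule fa_symbol_A_ideal[OF antisymmetric])

end

section \<open>The xi-degree\<close>

definition xi_deg :: "nat option \<Rightarrow> int" where
  "xi_deg s = (case s of None \<Rightarrow> 0 | Some _ \<Rightarrow> 1)"

definition homog :: "int \<Rightarrow> pol \<Rightarrow> bool" where
  "homog k p \<longleftrightarrow> (\<forall>a s. p (a,s) \<noteq> 0 \<longrightarrow> xi_deg s = k)"

definition deg_part :: "int \<Rightarrow> pol \<Rightarrow> pol" where
  "deg_part k p = (\<lambda>(a,s). if xi_deg s = k then p (a,s) else 0)"

lemma homogD: "homog k p \<Longrightarrow> p (a,s) \<noteq> 0 \<Longrightarrow> xi_deg s = k"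
  by (simp add: homog_def)

lemma homogI: "(\<And>a s. p (a,s) \<noteq> 0 \<Longrightarrow> xi_deg s = k) \<Longrightarrow> homog k p"
  by (simp add: homog_def)

lemma homog_lincomb: "(\<And>k. k \<in> K \<Longrightarrow> homog j (F k)) \<Longrightarrow> homog j (\<lambda>m. \<Sum>k\<in>K. c k * F k m)"
proof (rule homogI)
  fix a s assume F: "\<And>k. k \<in> K \<Longrightarrow> homog j (F k)" and nz: "(\<Sum>k\<in>K. c k * F k (a,s)) \<noteq> 0"
  then obtain k where "k \<in> K" "c k * F k (a,s) \<noteq> 0" by (meson sum.not_neutral_contains_not_neutral)
  then show "xi_deg s = j" using homogD[OF F[of k]] by auto
qed

lemma homog_add: "homog k p \<Longrightarrow> homog k q \<Longrightarrow> homog k (\<lambda>m. p m + q m)"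
proof (rule homogI)
  fix a s assume "homog k p" "homog k q" "p (a,s) + q (a,s) \<noteq> 0"
  then show "xi_deg s = k" using homogD by (cases "p (a,s) = 0") auto
qed

lemma homog_smult: "homog k p \<Longrightarrow> homog k (\<lambda>m. c * p m)"
proof (rule homogI)
  fix a s assume "homog k p" "c * p (a,s) \<noteq> 0"
  then show "xi_deg s = k" using homogD by auto
qed

lemma homog_mult_x: "homog k p \<Longrightarrow> homog k (mult_x i p)"
proof (rule homogI)
  fix a s assume "homog k p" "mult_x i p (a,s) \<noteq> 0"
  then show "xi_deg s = k"
    using homogD[of k p "a(i := a i - 1)" s] by (simp add: mult_x_def split: if_splits)
qed

lemma homog_deriv_x: "homog k p \<Longrightarrow> homog k (deriv_x i p)"
proof (rule homogI)
  fix a s assume "homog k p" "deriv_x i p (a,s) \<noteq> 0"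
  then show "xi_deg s = k" using homogD[of k p "a(i := a i + 1)" s] by (simp add: deriv_x_def)
qed

lemma homog_star_x: "homog k p \<Longrightarrow> homog k (star_x \<theta> i p)"
  unfolding star_x_def by (intro homog_add homog_mult_x homog_lincomb homog_deriv_x)

lemma homog_mult_xi: "homog k p \<Longrightarrow> homog (k + 1) (mult_xi i p)"
proof (rule homogI)
  fix a s assume p: "homog k p" and nz: "mult_xi i p (a,s) \<noteq> 0"
  then have "s = Some i" "p (a, None) \<noteq> 0" by (auto simp: mult_xi_def split: if_splits)
  moreover have "xi_deg None = k" using homogD[OF p \<open>p (a, None) \<noteq> 0\<close>] .
  ultimately show "xi_deg s = k + 1" by (simp add: xi_deg_def)
qed

lemma homog_word_action: "homog k p \<Longrightarrow> homog (k + int (word_deg w)) (word_action \<theta> w p)"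
proof (induction w arbitrary: k)
  case Nil then show ?case by simp
next
  case (Cons a w)
  show ?case
  proof (cases a)
    case (Xg i) then show ?thesis using Cons by (simp add: homog_star_x)
  next
    case (Eg i) then show ?thesis using homog_mult_xi[OF Cons.IH[OF Cons.prems]] by (simp add: algebra_simps)
  qed
qed

lemma homog_pol_one: "homog 0 pol_one"
  by (auto simp: homog_def pol_one_def xi_deg_def split: if_splits)

lemma homog_fa_action: "fa_homog k f \<Longrightarrow> homog j q \<Longrightarrow> homog (j + k) (fa_action \<theta> f q)"
  unfolding fa_action_def
proof (rule homog_lincomb)
  fix w assume "fa_homog k f" "homog j q" "w \<in> supp f"
  then have e: "int (word_deg w) = k" by (auto simp: fa_homog_def supp_def)
  show "homog (j + k) (word_action \<theta> w q)"
    using homog_word_action[OF \<open>homog j q\<close>, of w \<theta>] unfolding e .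
qed

lemma homog_fa_symbol: "fa_homog k f \<Longrightarrow> homog k (fa_symbol \<theta> f)"
  using homog_fa_action[OF _ homog_pol_one] by (simp add: fa_symbol_def)

lemma homog_pol_d: "homog k p \<Longrightarrow> homog (k + 1) (pol_d p)"
proof (rule homogI)
  fix a s assume p: "homog k p" and nz: "pol_d p (a,s) \<noteq> 0"
  then obtain i where "s = Some i" "p (a(i := a i + 1), None) \<noteq> 0"
    by (auto simp: pol_d_def deriv_x_def split: option.splits)
  moreover have "xi_deg None = k" using homogD[OF p \<open>p (a(i := a i + 1), None) \<noteq> 0\<close>] .
  ultimately show "xi_deg s = k + 1" by (simp add: xi_deg_def)
qed

lemma homog_zero: "homog k (\<lambda>m. 0)" by (simp add: homog_def)

lemma fa_homog_fa_of_pol: "homog k p \<Longrightarrow> fa_homog k (fa_of_pol n p)"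
proof -
  assume p: "homog k p"
  show ?thesis unfolding fa_homog_def
  proof (intro allI impI)
    fix w assume "fa_of_pol n p w \<noteq> 0"
    then obtain m where "valid_monomial n m" "ordered_word n m = w" "p m \<noteq> 0"
      using fa_of_pol_nonzero by blast
    moreover obtain a s where "m = (a,s)" by (cases m)
    ultimately have "xi_deg s = k" "ordered_word n (a,s) = w" using homogD[OF p] by auto
    then show "int (word_deg w) = k"
      by (auto simp: word_deg_ordered_word xi_deg_def split: option.splits)
  qed
qed

lemma homog_deg_part: "homog k (deg_part k p)"
  by (auto simp: homog_def deg_part_def)

lemma deg_part_homog_eq: "homog k p \<Longrightarrow> deg_part j p = (if j = k then p else (\<lambda>m. 0))"
proof (rule ext, clarify)
  fix a s assume p: "homog k p"
  show "deg_part j p (a,s) = (if j = k then p else (\<lambda>m. 0)) (a,s)"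
    using homogD[OF p, of a s] by (auto simp: deg_part_def)
qed

lemma pols_deg_part: "p \<in> pols n \<Longrightarrow> deg_part k p \<in> pols n"
proof -
  assume p: "p \<in> pols n"
  have "supp (deg_part k p) \<subseteq> supp p" by (auto simp: supp_def deg_part_def split: if_splits)
  then have "finite (supp (deg_part k p))"
    using p unfolding pols_def by (blast intro: finite_subset)
  moreover have "valid_monomial n m" if "deg_part k p m \<noteq> 0" for m
  proof -
    have "p m \<noteq> 0" using that by (cases m) (auto simp: deg_part_def split: if_splits)
    then show ?thesis using p unfolding pols_def by blast
  qed
  ultimately show ?thesis unfolding pols_def by blast
qed

lemma homog_eq_0_if_not_01: "homog k p \<Longrightarrow> k \<noteq> 0 \<Longrightarrow> k \<noteq> 1 \<Longrightarrow> p = (\<lambda>m. 0)"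
proof (rule ext, clarify)
  fix a s assume "homog k p" "k \<noteq> 0" "k \<noteq> 1"
  moreover have "xi_deg s = 0 \<or> xi_deg s = 1" by (simp add: xi_deg_def split: option.splits)
  ultimately show "p (a,s) = 0" using homogD by metis
qed

lemma deg_part_0_plus_deg_part_1: "(\<lambda>m. deg_part 0 p m + deg_part 1 p m) = p"
  by (auto simp: deg_part_def xi_deg_def fun_eq_iff split: option.splits)


section \<open>A\<theta> through symbols\<close>

lemma A_theta_simps:
  "dg_carrier (A_theta n \<theta>) = {A_cls n \<theta> f | f. f \<in> FA n}"
  "dg_hom (A_theta n \<theta>) k = {A_cls n \<theta> f | f. f \<in> FA n \<and> fa_homog k f}"
  "dg_add (A_theta n \<theta>) x y = A_cls n \<theta> (fa_add (A_rep x) (A_rep y))"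
  "dg_zero (A_theta n \<theta>) = A_cls n \<theta> fa_zero"
  "dg_smult (A_theta n \<theta>) c x = A_cls n \<theta> (fa_smult c (A_rep x))"
  "dg_mult (A_theta n \<theta>) x y = A_cls n \<theta> (fa_mult (A_rep x) (A_rep y))"
  "dg_one (A_theta n \<theta>) = A_cls n \<theta> fa_one"
  "dg_diff (A_theta n \<theta>) x = A_cls n \<theta> (fa_d (A_rep x))"
  by (simp_all add: A_theta_def)

definition symbol :: "(nat \<Rightarrow> nat \<Rightarrow> real) \<Rightarrow> (gen list \<Rightarrow> real) set \<Rightarrow> pol" where
  "symbol \<theta> x = fa_symbol \<theta> (A_rep x)"

definition action :: "(nat \<Rightarrow> nat \<Rightarrow> real) \<Rightarrow> (gen list \<Rightarrow> real) set \<Rightarrow> pol \<Rightarrow> pol" where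
  "action \<theta> x = fa_action \<theta> (A_rep x)"

lemma linear_op_action: "linear_op (action \<theta> x)"
  unfolding action_def by (rule linear_op_fa_action)

context theta_algebra
begin

lemma A_cls_eq: "f \<in> FA n \<Longrightarrow> A_cls n \<theta> f = {g \<in> FA n. fa_symbol \<theta> g = fa_symbol \<theta> f}"
  unfolding A_cls_def
  by (auto simp: A_ideal_iff_fa_symbol_eq_0 FA_sub fa_symbol_sub fun_eq_iff)

lemma A_cls_eq_iff:
  "f \<in> FA n \<Longrightarrow> g \<in> FA n \<Longrightarrow> A_cls n \<theta> f = A_cls n \<theta> g \<longleftrightarrow> fa_symbol \<theta> f = fa_symbol \<theta> g"
  by (auto simp: A_cls_eq)

lemma A_rep_A_cls:
  assumes "f \<in> FA n"
  shows "A_rep (A_cls n \<theta> f) \<in> FA n" "fa_symbol \<theta> (A_rep (A_cls n \<theta> f)) = fa_symbol \<theta> f"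
proof -
  have "f \<in> A_cls n \<theta> f" using A_cls_eq[OF assms] assms by simp
  then have "A_rep (A_cls n \<theta> f) \<in> A_cls n \<theta> f"
    unfolding A_rep_def by (rule someI[where P="\<lambda>g. g \<in> A_cls n \<theta> f"])
  then show "A_rep (A_cls n \<theta> f) \<in> FA n" "fa_symbol \<theta> (A_rep (A_cls n \<theta> f)) = fa_symbol \<theta> f"
    using A_cls_eq[OF assms] by simp_all
qed

lemma A_cls_in_carrier: "f \<in> FA n \<Longrightarrow> A_cls n \<theta> f \<in> dg_carrier (A_theta n \<theta>)"
  by (auto simp: A_theta_simps)

lemma A_rep_in_carrier:
  assumes "x \<in> dg_carrier (A_theta n \<theta>)"
  shows "A_rep x \<in> FA n" "A_cls n \<theta> (A_rep x) = x"
proof -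
  obtain f where f: "f \<in> FA n" "x = A_cls n \<theta> f" using assms by (auto simp: A_theta_simps)
  then show rep: "A_rep x \<in> FA n" using A_rep_A_cls by blast
  show "A_cls n \<theta> (A_rep x) = x"
    using A_cls_eq_iff[OF rep f(1)] A_rep_A_cls[OF f(1)] f(2) by simp
qed

lemma symbol_A_cls: "f \<in> FA n \<Longrightarrow> symbol \<theta> (A_cls n \<theta> f) = fa_symbol \<theta> f"
  unfolding symbol_def by (rule A_rep_A_cls)

lemma fa_action_eq_if_fa_symbol_eq:
  assumes f: "f \<in> FA n" and g: "g \<in> FA n" and eq: "fa_symbol \<theta> f = fa_symbol \<theta> g"
  shows "fa_action \<theta> f = fa_action \<theta> g"
proof -
  have "fa_sub f g \<in> A_ideal n \<theta>"
    using eq fa_symbol_sub[OF f g, of \<theta>] by (simp add: A_ideal_iff_fa_symbol_eq_0 FA_sub f g)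
  then have "fa_action \<theta> (fa_sub f g) p = (\<lambda>m. 0)" for p
    by (rule fa_action_A_ideal[OF antisymmetric])
  then show ?thesis
    unfolding fa_action_sub[OF FA_finite_supp[OF f] FA_finite_supp[OF g]]
    by (auto simp: fun_eq_iff dest: fun_cong)
qed

lemma action_A_cls: "f \<in> FA n \<Longrightarrow> action \<theta> (A_cls n \<theta> f) = fa_action \<theta> f"
  unfolding action_def using A_rep_A_cls fa_action_eq_if_fa_symbol_eq by blast

lemma symbol_inj:
  assumes "x \<in> dg_carrier (A_theta n \<theta>)" "y \<in> dg_carrier (A_theta n \<theta>)" "symbol \<theta> x = symbol \<theta> y"
  shows "x = y"
  using assms A_rep_in_carrier[OF assms(1)] A_rep_in_carrier[OF assms(2)] A_cls_eq_iff
  unfolding symbol_def by metis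

lemma symbol_add:
  "x \<in> dg_carrier (A_theta n \<theta>) \<Longrightarrow> y \<in> dg_carrier (A_theta n \<theta>) \<Longrightarrow>
   dg_add (A_theta n \<theta>) x y \<in> dg_carrier (A_theta n \<theta>) \<and>
   symbol \<theta> (dg_add (A_theta n \<theta>) x y) = (\<lambda>m. symbol \<theta> x m + symbol \<theta> y m) \<and>
   action \<theta> (dg_add (A_theta n \<theta>) x y) = (\<lambda>p m. action \<theta> x p m + action \<theta> y p m)"
  using A_rep_in_carrier(1)[of x] A_rep_in_carrier(1)[of y]
  by (simp add: A_theta_simps(3) A_cls_in_carrier FA_add symbol_A_cls action_A_cls fa_symbol_add
      fa_action_add FA_finite_supp fun_eq_iff) (simp add: symbol_def action_def)

lemma symbol_smult:
  "x \<in> dg_carrier (A_theta n \<theta>) \<Longrightarrow>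
   dg_smult (A_theta n \<theta>) c x \<in> dg_carrier (A_theta n \<theta>) \<and>
   symbol \<theta> (dg_smult (A_theta n \<theta>) c x) = (\<lambda>m. c * symbol \<theta> x m) \<and>
   action \<theta> (dg_smult (A_theta n \<theta>) c x) = (\<lambda>p m. c * action \<theta> x p m)"
  using A_rep_in_carrier(1)[of x]
  by (simp add: A_theta_simps(5) A_cls_in_carrier FA_smult symbol_A_cls action_A_cls
      fa_symbol_smult fa_action_smult FA_finite_supp fun_eq_iff) (simp add: symbol_def action_def)

lemma symbol_mult:
  "x \<in> dg_carrier (A_theta n \<theta>) \<Longrightarrow> y \<in> dg_carrier (A_theta n \<theta>) \<Longrightarrow>
   dg_mult (A_theta n \<theta>) x y \<in> dg_carrier (A_theta n \<theta>) \<and>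
   symbol \<theta> (dg_mult (A_theta n \<theta>) x y) = action \<theta> x (symbol \<theta> y) \<and>
   action \<theta> (dg_mult (A_theta n \<theta>) x y) = (\<lambda>p. action \<theta> x (action \<theta> y p))"
  using A_rep_in_carrier(1)[of x] A_rep_in_carrier(1)[of y]
  by (simp add: A_theta_simps(6) A_cls_in_carrier FA_mult symbol_A_cls action_A_cls fa_symbol_def
      fa_action_mult FA_finite_supp fun_eq_iff) (simp add: symbol_def action_def fa_symbol_def)

lemma symbol_zero:
  "dg_zero (A_theta n \<theta>) \<in> dg_carrier (A_theta n \<theta>) \<and> symbol \<theta> (dg_zero (A_theta n \<theta>)) = (\<lambda>m. 0)"
  by (simp add: A_theta_simps(4) A_cls_in_carrier FA_zero symbol_A_cls fa_symbol_zero)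

lemma symbol_one:
  "dg_one (A_theta n \<theta>) \<in> dg_carrier (A_theta n \<theta>) \<and> symbol \<theta> (dg_one (A_theta n \<theta>)) = pol_one \<and>
   action \<theta> (dg_one (A_theta n \<theta>)) = (\<lambda>p. p)"
  by (simp add: A_theta_simps(7) A_cls_in_carrier FA_one symbol_A_cls action_A_cls fa_symbol_def
      fa_action_one fun_eq_iff)

lemma symbol_diff:
  "x \<in> dg_carrier (A_theta n \<theta>) \<Longrightarrow>
   dg_diff (A_theta n \<theta>) x \<in> dg_carrier (A_theta n \<theta>) \<and>
   symbol \<theta> (dg_diff (A_theta n \<theta>) x) = pol_d (symbol \<theta> x)"
  using A_rep_in_carrier(1)[of x]
  by (simp add: A_theta_simps(8) A_cls_in_carrier FA_d symbol_A_cls fa_symbol_d FA_finite_supp)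
    (simp add: symbol_def)

lemmas symbol_ops = symbol_add symbol_smult symbol_mult symbol_zero symbol_one symbol_diff

lemma action_pol_one: "action \<theta> x pol_one = symbol \<theta> x"
  by (simp add: action_def symbol_def fa_symbol_def)

lemma symbol_in_pols: "x \<in> dg_carrier (A_theta n \<theta>) \<Longrightarrow> symbol \<theta> x \<in> pols n"
  unfolding symbol_def using A_rep_in_carrier by (simp add: pols_fa_symbol)

lemma A_cls_fa_of_pol_symbol:
  "x \<in> dg_carrier (A_theta n \<theta>) \<Longrightarrow> A_cls n \<theta> (fa_of_pol n (symbol \<theta> x)) = x"
  by (rule symbol_inj)
    (simp_all add: A_cls_in_carrier FA_fa_of_pol symbol_in_pols symbol_A_cls fa_symbol_fa_of_pol)

lemma A_cls_fa_of_pol: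
  assumes "p \<in> pols n"
  shows "A_cls n \<theta> (fa_of_pol n p) \<in> dg_carrier (A_theta n \<theta>)" "symbol \<theta> (A_cls n \<theta> (fa_of_pol n p)) = p"
  using assms by (simp_all add: A_cls_in_carrier FA_fa_of_pol symbol_A_cls fa_symbol_fa_of_pol)

lemma hom_iff: "x \<in> dg_hom (A_theta n \<theta>) k \<longleftrightarrow> x \<in> dg_carrier (A_theta n \<theta>) \<and> homog k (symbol \<theta> x)"
proof
  assume "x \<in> dg_hom (A_theta n \<theta>) k"
  then obtain f where "f \<in> FA n" "fa_homog k f" "x = A_cls n \<theta> f" by (auto simp: A_theta_simps)
  then show "x \<in> dg_carrier (A_theta n \<theta>) \<and> homog k (symbol \<theta> x)"
    by (simp add: A_cls_in_carrier symbol_A_cls homog_fa_symbol)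
next
  assume x: "x \<in> dg_carrier (A_theta n \<theta>) \<and> homog k (symbol \<theta> x)"
  then have "x = A_cls n \<theta> (fa_of_pol n (symbol \<theta> x))"
    "fa_of_pol n (symbol \<theta> x) \<in> FA n" "fa_homog k (fa_of_pol n (symbol \<theta> x))"
    by (simp_all add: A_cls_fa_of_pol_symbol FA_fa_of_pol symbol_in_pols fa_homog_fa_of_pol)
  then show "x \<in> dg_hom (A_theta n \<theta>) k" unfolding A_theta_simps by blast
qed

lemma hom_obtain_rep:
  assumes "x \<in> dg_hom (A_theta n \<theta>) k"
  obtains f where "f \<in> FA n" "fa_homog k f" "action \<theta> x = fa_action \<theta> f" "symbol \<theta> x = fa_symbol \<theta> f"
  using assms by (auto simp: A_theta_simps action_A_cls symbol_A_cls)

end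

section \<open>A\<theta> is a differential graded algebra\<close>

context theta_algebra
begin

lemma foldr_add_symbol:
  assumes "\<And>k. k \<in> set ks \<Longrightarrow> c k \<in> dg_carrier (A_theta n \<theta>)"
  shows "foldr (\<lambda>k acc. dg_add (A_theta n \<theta>) (c k) acc) ks (dg_zero (A_theta n \<theta>)) \<in> dg_carrier (A_theta n \<theta>) \<and>
    symbol \<theta> (foldr (\<lambda>k acc. dg_add (A_theta n \<theta>) (c k) acc) ks (dg_zero (A_theta n \<theta>))) =
     (\<lambda>m. sum_list (map (\<lambda>k. symbol \<theta> (c k) m) ks))"
  using assms by (induction ks) (simp_all add: symbol_ops)

lemma dg_sum_symbol:
  assumes "finite {k. c k \<noteq> dg_zero (A_theta n \<theta>)}" "\<And>k. c k \<in> dg_carrier (A_theta n \<theta>)"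
  shows "dg_sum (A_theta n \<theta>) c \<in> dg_carrier (A_theta n \<theta>) \<and>
    symbol \<theta> (dg_sum (A_theta n \<theta>) c) = (\<lambda>m. \<Sum>k | c k \<noteq> dg_zero (A_theta n \<theta>). symbol \<theta> (c k) m)"
  using foldr_add_symbol[of "sorted_list_of_set {k. c k \<noteq> dg_zero (A_theta n \<theta>)}" c] assms
  by (simp add: dg_sum_def sum_list_distinct_conv_sum_set)

lemma symbol_homogeneous_component:
  assumes c: "\<forall>k. c k \<in> dg_hom (A_theta n \<theta>) k" "finite {k. c k \<noteq> dg_zero (A_theta n \<theta>)}"
    and x: "x = dg_sum (A_theta n \<theta>) c"
  shows "symbol \<theta> (c j) = deg_part j (symbol \<theta> x)"
proof -
  let ?K = "{k. c k \<noteq> dg_zero (A_theta n \<theta>)}"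
  have carrier: "c k \<in> dg_carrier (A_theta n \<theta>)" and homog: "homog k (symbol \<theta> (c k))" for k
    using c(1) hom_iff by blast+
  have "deg_part j (symbol \<theta> x) = (\<lambda>m. \<Sum>k\<in>?K. deg_part j (symbol \<theta> (c k)) m)"
    using dg_sum_symbol[OF c(2) carrier] x by (simp add: deg_part_def fun_eq_iff)
  also have "\<dots> = (\<lambda>m. \<Sum>k\<in>?K. if k = j then symbol \<theta> (c k) m else 0)"
    by (intro ext sum.cong) (auto simp: deg_part_homog_eq[OF homog])
  also have "\<dots> = symbol \<theta> (c j)"
    using c(2) symbol_zero by (auto simp: sum.delta' fun_eq_iff)
  finally show ?thesis by simp
qed

lemma homogeneous_decomposition:
  assumes x: "x \<in> dg_carrier (A_theta n \<theta>)"
  shows "\<exists>!c. (\<forall>k. c k \<in> dg_hom (A_theta n \<theta>) k) \<and> finite {k. c k \<noteq> dg_zero (A_theta n \<theta>)} \<and>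
              x = dg_sum (A_theta n \<theta>) c"
proof
  define c where "c k = A_cls n \<theta> (fa_of_pol n (deg_part k (symbol \<theta> x)))" for k
  have carrier: "c k \<in> dg_carrier (A_theta n \<theta>)" and symbol_c: "symbol \<theta> (c k) = deg_part k (symbol \<theta> x)" for k
    unfolding c_def using symbol_in_pols[OF x]
    by (simp_all add: A_cls_in_carrier FA_fa_of_pol pols_deg_part symbol_A_cls fa_symbol_fa_of_pol)
  have support: "{k. c k \<noteq> dg_zero (A_theta n \<theta>)} \<subseteq> {0, 1}"
  proof
    fix k assume "k \<in> {k. c k \<noteq> dg_zero (A_theta n \<theta>)}"
    moreover have "c k = dg_zero (A_theta n \<theta>)" if "k \<notin> {0, 1}"
      using homog_eq_0_if_not_01[OF homog_deg_part] symbol_c symbol_zero that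
      by (intro symbol_inj[OF carrier]) auto
    ultimately show "k \<in> {0, 1}" by blast
  qed
  then have finite: "finite {k. c k \<noteq> dg_zero (A_theta n \<theta>)}" by (rule finite_subset) simp
  have "deg_part k (symbol \<theta> x) m = 0" if "k \<in> {0, 1} - {k. c k \<noteq> dg_zero (A_theta n \<theta>)}" for k m
    using that symbol_c[of k] symbol_zero by (metis (mono_tags, lifting) DiffD2 mem_Collect_eq)
  then have "symbol \<theta> (dg_sum (A_theta n \<theta>) c) = (\<lambda>m. \<Sum>k\<in>{0, 1}. deg_part k (symbol \<theta> x) m)"
    unfolding dg_sum_symbol[OF finite carrier, THEN conjunct2] symbol_c
    by (intro ext sum.mono_neutral_left) (use support in auto)
  also have "\<dots> = symbol \<theta> x"
    using deg_part_0_plus_deg_part_1[of "symbol \<theta> x"] by simp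
  finally have "x = dg_sum (A_theta n \<theta>) c"
    using symbol_inj[OF x] dg_sum_symbol[OF finite carrier] by simp
  moreover have "\<forall>k. c k \<in> dg_hom (A_theta n \<theta>) k"
    using carrier symbol_c by (simp add: hom_iff homog_deg_part)
  ultimately show "(\<forall>k. c k \<in> dg_hom (A_theta n \<theta>) k) \<and> finite {k. c k \<noteq> dg_zero (A_theta n \<theta>)} \<and>
      x = dg_sum (A_theta n \<theta>) c"
    using finite by blast
  fix c' assume c': "(\<forall>k. c' k \<in> dg_hom (A_theta n \<theta>) k) \<and> finite {k. c' k \<noteq> dg_zero (A_theta n \<theta>)} \<and>
      x = dg_sum (A_theta n \<theta>) c'"
  show "c' = c"
  proof
    fix k
    show "c' k = c k"
      using symbol_homogeneous_component[of c' x k] c' symbol_c carrier hom_iff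
      by (metis symbol_inj)
  qed
qed

lemma leibniz:
  assumes x: "x \<in> dg_hom (A_theta n \<theta>) k" and y: "y \<in> dg_carrier (A_theta n \<theta>)"
  shows "dg_diff (A_theta n \<theta>) (dg_mult (A_theta n \<theta>) x y) =
    dg_add (A_theta n \<theta>) (dg_mult (A_theta n \<theta>) (dg_diff (A_theta n \<theta>) x) y)
      (dg_smult (A_theta n \<theta>) (if even k then 1 else -1) (dg_mult (A_theta n \<theta>) x (dg_diff (A_theta n \<theta>) y)))"
proof -
  obtain f where f: "f \<in> FA n" "fa_homog k f" "action \<theta> x = fa_action \<theta> f" "symbol \<theta> x = fa_symbol \<theta> f"
    using hom_obtain_rep[OF x] by blast
  have x': "x \<in> dg_carrier (A_theta n \<theta>)" using x hom_iff by blast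
  have "fa_symbol \<theta> (fa_d (A_rep x)) = fa_symbol \<theta> (fa_d f)"
    using f A_rep_in_carrier[OF x'] by (simp add: fa_symbol_d FA_finite_supp symbol_def)
  then have "action \<theta> (dg_diff (A_theta n \<theta>) x) = fa_action \<theta> (fa_d f)"
    using A_rep_in_carrier[OF x']
    by (simp add: A_theta_simps action_A_cls FA_d fa_action_eq_if_fa_symbol_eq f(1))
  then show ?thesis
    by (intro symbol_inj)
      (simp_all add: symbol_ops x' y f(3) pol_d_fa_action_fa_homog[OF FA_finite_supp[OF f(1)] f(2)])
qed

lemma hom_mult:
  assumes x: "x \<in> dg_hom (A_theta n \<theta>) k" and y: "y \<in> dg_hom (A_theta n \<theta>) l"
  shows "dg_mult (A_theta n \<theta>) x y \<in> dg_hom (A_theta n \<theta>) (k + l)"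
proof -
  obtain f where f: "fa_homog k f" "action \<theta> x = fa_action \<theta> f" using hom_obtain_rep[OF x] by blast
  have "homog (l + k) (fa_action \<theta> f (symbol \<theta> y))"
    using homog_fa_action[OF f(1)] y hom_iff by blast
  then show ?thesis using x y f(2) by (simp add: hom_iff symbol_ops add.commute)
qed

theorem dga_A_theta: "dga (A_theta n \<theta>)"
  unfolding dga_def Let_def
  apply (intro conjI)
  subgoal by (simp add: symbol_ops)
  subgoal by (simp add: symbol_ops)
  subgoal by (simp add: symbol_ops)
  subgoal by (simp add: symbol_ops)
  subgoal by (simp add: symbol_ops)
  subgoal by (intro ballI symbol_inj) (simp_all add: symbol_ops algebra_simps)
  subgoal by (intro ballI symbol_inj) (simp_all add: symbol_ops algebra_simps)
  subgoal by (intro ballI symbol_inj) (simp_all add: symbol_ops)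
  subgoal
    apply (intro ballI)
    subgoal for x
      by (intro bexI[of _ "dg_smult (A_theta n \<theta>) (-1) x"] symbol_inj) (simp_all add: symbol_ops)
    done
  subgoal by (intro allI ballI symbol_inj) (simp_all add: symbol_ops mult.assoc)
  subgoal by (intro ballI symbol_inj) (simp_all add: symbol_ops)
  subgoal by (intro allI ballI symbol_inj) (simp_all add: symbol_ops algebra_simps)
  subgoal by (intro allI ballI symbol_inj) (simp_all add: symbol_ops algebra_simps)
  subgoal by (intro ballI symbol_inj) (simp_all add: symbol_ops)
  subgoal by (intro ballI conjI symbol_inj) (simp_all add: symbol_ops action_pol_one)
  subgoal by (intro ballI conjI symbol_inj)
      (simp_all add: symbol_ops linear_op_add[OF linear_op_action])
  subgoal by (intro allI ballI conjI symbol_inj)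
      (simp_all add: symbol_ops linear_op_smult[OF linear_op_action])
  subgoal by (auto simp: hom_iff symbol_ops homog_zero homog_add homog_smult)
  subgoal using homogeneous_decomposition by blast
  subgoal using hom_mult by blast
  subgoal by (simp add: hom_iff symbol_ops homog_pol_one)
  subgoal by (intro ballI symbol_inj) (simp_all add: symbol_ops linear_op_add[OF linear_op_pol_d])
  subgoal by (intro allI ballI symbol_inj) (simp_all add: symbol_ops linear_op_smult[OF linear_op_pol_d])
  subgoal by (auto simp: hom_iff symbol_ops homog_pol_d)
  subgoal by (intro ballI symbol_inj) (simp_all add: symbol_ops pol_d_pol_d)
  subgoal using leibniz by blast
  done

end

section \<open>Cohomology of the symbol complex\<close>

text \<open>A complement of the exact forms among the 1-forms.\<close>

definition H1_reps :: "nat \<Rightarrow> pol set" where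
  "H1_reps n = {v \<in> pols n. homog 1 v \<and> (\<forall>a i. v (a, Some i) \<noteq> 0 \<longrightarrow> (\<exists>j<i. 0 < a j))}"

lemma H1_reps_pols: "v \<in> H1_reps n \<Longrightarrow> v \<in> pols n"
  by (simp add: H1_reps_def)

lemma H1_reps_homog: "v \<in> H1_reps n \<Longrightarrow> homog 1 v"
  by (simp add: H1_reps_def)

lemma H1_reps_zero: "(\<lambda>m. 0) \<in> H1_reps n"
  by (simp add: H1_reps_def pols_zero homog_zero)

lemma H1_reps_add: "v \<in> H1_reps n \<Longrightarrow> w \<in> H1_reps n \<Longrightarrow> (\<lambda>m. v m + w m) \<in> H1_reps n"
  unfolding H1_reps_def by (auto simp: pols_add homog_add) (metis add.left_neutral add.right_neutral)+

lemma H1_reps_smult: "v \<in> H1_reps n \<Longrightarrow> (\<lambda>m. c * v m) \<in> H1_reps n"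
  unfolding H1_reps_def by (auto simp: pols_smult homog_smult)

lemma pol_d_homog_1: "homog 1 v \<Longrightarrow> pol_d v = (\<lambda>m. 0)"
  by (auto simp: homog_def xi_deg_def pol_d_def deriv_x_def fun_eq_iff split: option.splits)

lemma homog_0_Some: "homog 0 p \<Longrightarrow> p (a, Some i) = 0"
  using homogD[of 0 p a "Some i"] by (auto simp: xi_deg_def)

lemma pol_d_Some: "pol_d q (a, Some i) = real (Suc (a i)) * q (a(i := Suc (a i)), None)"
  by (simp add: pol_d_def deriv_x_def)

definition first_var :: "(nat \<Rightarrow> nat) \<Rightarrow> nat" where
  "first_var b = (LEAST i. 0 < b i)"

lemma first_var:
  assumes "b \<noteq> (\<lambda>_. 0)"
  shows "0 < b (first_var b)" "\<forall>j < first_var b. b j = 0"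
proof -
  obtain i where "0 < b i" using assms by (auto simp: fun_eq_iff)
  then show "0 < b (first_var b)" unfolding first_var_def by (rule LeastI)
  show "\<forall>j < first_var b. b j = 0" unfolding first_var_def using not_less_Least by blast
qed

lemma first_var_eq: "0 < b i \<Longrightarrow> \<forall>j<i. b j = 0 \<Longrightarrow> first_var b = i"
  unfolding first_var_def by (rule Least_equality) (auto simp: not_less)

lemma fun_upd_Suc_neq_zero: "a(i := Suc (a i)) \<noteq> (\<lambda>_. 0::nat)"
  by (metis fun_upd_same nat.distinct(1))

lemma fun_upd_pred_Suc: "0 < b i \<Longrightarrow> (b(i := b i - 1))(i := Suc ((b(i := b i - 1)) i)) = b"
  by (auto simp: fun_eq_iff)

lemma coeff_eq_0_if_pol_d_eq_0:
  assumes "b \<noteq> (\<lambda>_. 0)"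
    and "pol_d q (b(first_var b := b (first_var b) - 1), Some (first_var b)) = 0"
  shows "q (b, None) = 0"
  using assms first_var(1)[OF assms(1)] by (simp add: pol_d_Some)

lemma exact_in_H1_reps_eq_0:
  assumes "\<And>a i. pol_d q (a, Some i) \<noteq> 0 \<Longrightarrow> \<exists>j<i. 0 < a j"
  shows "pol_d q = (\<lambda>m. 0)"
proof -
  have q: "q (b, None) = 0" if b: "b \<noteq> (\<lambda>_. 0)" for b
  proof (rule coeff_eq_0_if_pol_d_eq_0[OF b])
    have "\<not> (\<exists>j<first_var b. 0 < (b(first_var b := b (first_var b) - 1)) j)"
      using first_var(2)[OF b] by auto
    then show "pol_d q (b(first_var b := b (first_var b) - 1), Some (first_var b)) = 0"
      using assms by blast
  qed
  show ?thesis
  proof (rule ext, clarify)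
    fix a s
    show "pol_d q (a, s) = 0"
      using q[OF fun_upd_Suc_neq_zero] by (cases s) (simp_all add: pol_d_apply deriv_x_apply)
  qed
qed

lemma closed_homog_0_eq_const:
  assumes p: "homog 0 p" and d: "pol_d p = (\<lambda>m. 0)"
  shows "p = (\<lambda>m. p (\<lambda>_. 0, None) * pol_one m)"
proof (rule ext, clarify)
  fix b s
  show "p (b, s) = p (\<lambda>_. 0, None) * pol_one (b, s)"
  proof (cases s)
    case None
    have "p (b, None) = 0" if "b \<noteq> (\<lambda>_. 0)"
      by (rule coeff_eq_0_if_pol_d_eq_0[OF that]) (simp add: d)
    then show ?thesis using None by (cases "b = (\<lambda>_. 0)") (simp_all add: pol_one_def)
  qed (simp add: homog_0_Some[OF p] pol_one_def)
qed

lemma pols_pol_d: "p \<in> pols n \<Longrightarrow> pol_d p \<in> pols n"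
proof -
  assume p: "p \<in> pols n"
  have "supp (pol_d p) \<subseteq> (\<Union>i<n. (\<lambda>(b,s). (b(i := b i - 1), Some i)) ` supp p)"
  proof clarify
    fix a s assume "(a, s) \<in> supp (pol_d p)"
    then obtain i where s: "s = Some i" and nz: "p (a(i := Suc (a i)), None) \<noteq> 0"
      by (auto simp: supp_def pol_d_def deriv_x_def split: option.splits)
    have "valid_monomial n (a(i := Suc (a i)), None)" using p nz unfolding pols_def by blast
    then have i: "i < n" by (auto simp: valid_monomial_def dest: spec[of _ i])
    show "(a, s) \<in> (\<Union>i<n. (\<lambda>(b,s). (b(i := b i - 1), Some i)) ` supp p)"
      using i nz s by (auto simp: supp_def intro!: bexI[of _ i] image_eqI[of _ _ "(a(i := Suc (a i)), None)"])
  qed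
  then have "finite (supp (pol_d p))" by (rule finite_subset) (use p in \<open>auto simp: pols_def\<close>)
  moreover have "valid_monomial n m" if nzm: "pol_d p m \<noteq> 0" for m
  proof -
    obtain a s where m: "m = (a,s)" by (cases m)
    then obtain i where s: "s = Some i" and nz: "p (a(i := Suc (a i)), None) \<noteq> 0"
      using nzm by (auto simp: pol_d_def deriv_x_def split: option.splits)
    have v: "valid_monomial n (a(i := Suc (a i)), None)" using p nz unfolding pols_def by blast
    then have i: "i < n" by (auto simp: valid_monomial_def dest: spec[of _ i])
    then show ?thesis using v m s by (auto simp: valid_monomial_def)
  qed
  ultimately show ?thesis unfolding pols_def by blast
qed

text \<open>A primitive of a 1-form, obtained by integrating its coefficient of xi^i in x_i where
  i is the first variable occurring in the monomial.\<close>

definition primitive :: "pol \<Rightarrow> pol" where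
  "primitive p = (\<lambda>(b,s). if s = None \<and> b \<noteq> (\<lambda>_. 0)
      then p (b(first_var b := b (first_var b) - 1), Some (first_var b)) / real (b (first_var b))
      else 0)"

lemma primitive_apply: "primitive p (b, s) = (if s = None \<and> b \<noteq> (\<lambda>_. 0)
      then p (b(first_var b := b (first_var b) - 1), Some (first_var b)) / real (b (first_var b)) else 0)"
  by (simp add: primitive_def)

lemma homog_primitive: "homog 0 (primitive p)"
  by (rule homogI) (auto simp: primitive_apply xi_deg_def split: if_splits)

lemma primitive_pols: "p \<in> pols n \<Longrightarrow> primitive p \<in> pols n"
proof -
  assume p: "p \<in> pols n"
  have "supp (primitive p) \<subseteq> (\<lambda>(a,s). (a(the s := Suc (a (the s))), None)) ` supp p"
  proof clarify
    fix b s assume "(b,s) \<in> supp (primitive p)"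
    then have h: "s = None" "b \<noteq> (\<lambda>_. 0)" "p (b(first_var b := b (first_var b) - 1), Some (first_var b)) \<noteq> 0"
      by (auto simp: supp_def primitive_apply split: if_splits)
    have l: "0 < b (first_var b)" using first_var[OF h(2)] by auto
    have "(b(first_var b := b (first_var b) - 1))(first_var b := Suc ((b(first_var b := b (first_var b) - 1)) (first_var b))) = b"
      by (rule fun_upd_pred_Suc[where b=b and i="first_var b", OF l])
    then show "(b,s) \<in> (\<lambda>(a,s). (a(the s := Suc (a (the s))), None)) ` supp p"
      using h(3) h(1)
      by (intro image_eqI[of _ _ "(b(first_var b := b (first_var b) - 1), Some (first_var b))"]) (auto simp: supp_def)
  qed
  then have "finite (supp (primitive p))" by (rule finite_subset) (use p in \<open>auto simp: pols_def\<close>)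
  moreover have "valid_monomial n m" if nzm: "primitive p m \<noteq> 0" for m
  proof -
    obtain b s where m: "m = (b,s)" by (cases m)
    then have h: "s = None" "b \<noteq> (\<lambda>_. 0)" "p (b(first_var b := b (first_var b) - 1), Some (first_var b)) \<noteq> 0"
      using nzm by (auto simp: primitive_apply split: if_splits)
    have v: "valid_monomial n (b(first_var b := b (first_var b) - 1), Some (first_var b))"
      using p h(3) unfolding pols_def by blast
    then have "first_var b < n" by (simp add: valid_monomial_def)
    then show ?thesis using v m h(1) by (auto simp: valid_monomial_def)
  qed
  ultimately show ?thesis unfolding pols_def by blast
qed

lemma pol_d_primitive:
  assumes "\<forall>j<i. a j = 0"
  shows "pol_d (primitive p) (a, Some i) = p (a, Some i)"
proof -
  let ?b = "a(i := Suc (a i))"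
  have "first_var ?b = i" by (rule first_var_eq) (use assms in auto)
  moreover have "?b(i := ?b i - 1) = a" by (auto simp: fun_eq_iff)
  ultimately show ?thesis
    using fun_upd_Suc_neq_zero[of a i] by (simp add: pol_d_Some primitive_apply)
qed

lemma H1_reps_diff_pol_d_primitive:
  assumes p: "p \<in> pols n" "homog 1 p"
  shows "(\<lambda>m. p m - pol_d (primitive p) m) \<in> H1_reps n"
proof -
  have "(\<lambda>m. p m + (-1) * pol_d (primitive p) m) \<in> pols n"
    by (intro pols_add pols_smult pols_pol_d primitive_pols p)
  moreover have "homog 1 (\<lambda>m. p m + (-1) * pol_d (primitive p) m)"
    using homog_pol_d[OF homog_primitive] by (intro homog_add homog_smult p) simp
  moreover have "\<exists>j<i. 0 < a j" if "p (a, Some i) - pol_d (primitive p) (a, Some i) \<noteq> 0" for a i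
  proof (rule ccontr)
    assume "\<not> (\<exists>j<i. 0 < a j)"
    then show False using that pol_d_primitive[of i a p] by simp
  qed
  ultimately show ?thesis unfolding H1_reps_def by (simp only: mult_minus1 diff_conv_add_uminus) blast
qed

lemma closed_pol_decomposition:
  assumes p: "p \<in> pols n" "homog k p" "pol_d p = (\<lambda>m. 0)"
  obtains F c v where "F \<in> pols n" "homog (k - 1) F" "v \<in> H1_reps n"
    "homog k (\<lambda>m. c * pol_one m + v m)" "p = (\<lambda>m. pol_d F m + (c * pol_one m + v m))"
proof -
  have d0: "pol_d (\<lambda>m. 0) = (\<lambda>m. 0)" using linear_op_zero[OF linear_op_pol_d] .
  consider "k = 0" | "k = 1" | "k \<noteq> 0 \<and> k \<noteq> 1" by blast
  then show ?thesis
  proof cases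
    case 1
    have "p = (\<lambda>m. p (\<lambda>_. 0, None) * pol_one m)"
      by (rule closed_homog_0_eq_const) (use p 1 in simp_all)
    then have "p = (\<lambda>m. pol_d (\<lambda>m. 0) m + (p (\<lambda>_. 0, None) * pol_one m + 0))"
      unfolding d0 by simp
    moreover have "homog k (\<lambda>m. p (\<lambda>_. 0, None) * pol_one m + 0)"
      using homog_smult[OF homog_pol_one] 1 by simp
    ultimately show ?thesis using that pols_zero homog_zero H1_reps_zero by blast
  next
    case 2
    let ?v = "\<lambda>m. p m - pol_d (primitive p) m"
    have v: "?v \<in> H1_reps n" using H1_reps_diff_pol_d_primitive p 2 by simp
    then have "homog k (\<lambda>m. 0 * pol_one m + ?v m)" using 2 by (simp add: H1_reps_homog)
    moreover have "p = (\<lambda>m. pol_d (primitive p) m + (0 * pol_one m + ?v m))" by simp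
    moreover have "homog (k - 1) (primitive p)" using homog_primitive 2 by simp
    ultimately show ?thesis using that primitive_pols[OF p(1)] v by blast
  next
    case 3
    then have "p = (\<lambda>m. pol_d (\<lambda>m. 0) m + (0 * pol_one m + 0))"
      using homog_eq_0_if_not_01[OF p(2)] d0 by simp
    moreover have "homog k (\<lambda>m. 0 * pol_one m + 0)" by (simp add: homog_zero)
    ultimately show ?thesis using that pols_zero homog_zero H1_reps_zero by blast
  qed
qed

lemma deg_part_0_pol_d: "deg_part 0 (pol_d q) = (\<lambda>m. 0)"
  by (auto simp: deg_part_def pol_d_def xi_deg_def fun_eq_iff split: option.splits)

lemma deg_part_const_plus_H1:
  assumes v: "v \<in> H1_reps n"
  shows "deg_part k (\<lambda>m. c * pol_one m + v m)
    = (\<lambda>m. (if k = 0 then c else 0) * pol_one m + (if k = 1 then v m else 0))"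
proof -
  have "deg_part k (\<lambda>m. c * pol_one m + v m) = (\<lambda>m. deg_part k (\<lambda>m. c * pol_one m) m + deg_part k v m)"
    by (auto simp: deg_part_def fun_eq_iff)
  then show ?thesis
    using deg_part_homog_eq[OF homog_smult[OF homog_pol_one, of c], of k]
      deg_part_homog_eq[OF H1_reps_homog[OF v], of k]
    by (auto simp: fun_eq_iff)
qed

lemma exact_const_plus_H1_eq_0:
  assumes v: "v \<in> H1_reps n" and exact: "(\<lambda>m. c * pol_one m + v m) = pol_d q"
  shows "c = 0" "v = (\<lambda>m. 0)"
proof -
  have "(\<lambda>m. c * pol_one m) = (\<lambda>m. 0)"
    using arg_cong[OF exact, of "deg_part 0"] by (simp add: deg_part_const_plus_H1[OF v] deg_part_0_pol_d)
  then have "c * pol_one (\<lambda>_. 0, None) = 0" by (rule fun_cong)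
  then show c: "c = 0" by (simp add: pol_one_def)
  have "pol_d q = (\<lambda>m. 0)"
  proof (rule exact_in_H1_reps_eq_0)
    fix a i assume "pol_d q (a, Some i) \<noteq> 0"
    then have "v (a, Some i) \<noteq> 0" using exact c by (metis add_0 mult_zero_left)
    then show "\<exists>j<i. 0 < a j" using v unfolding H1_reps_def by blast
  qed
  then show "v = (\<lambda>m. 0)" using exact c by simp
qed

section \<open>Sub-dgas and spans\<close>

lemma dga_add_smult_minus_one:
  assumes "dga A" "x \<in> dg_carrier A"
  shows "dg_add A x (dg_smult A (-1) x) = dg_zero A"
proof -
  let ?C = "dg_carrier A" and ?add = "dg_add A" and ?sm = "dg_smult A" and ?o = "dg_zero A"
  have ax: "?o \<in> ?C" "\<forall>a. \<forall>x\<in>?C. ?sm a x \<in> ?C"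
    "\<forall>x\<in>?C. \<forall>y\<in>?C. \<forall>w\<in>?C. ?add (?add x y) w = ?add x (?add y w)"
    "\<forall>x\<in>?C. \<forall>y\<in>?C. ?add x y = ?add y x" "\<forall>x\<in>?C. ?add ?o x = x"
    "\<forall>x\<in>?C. \<exists>y\<in>?C. ?add x y = ?o" "\<forall>x\<in>?C. ?sm 1 x = x"
    "\<forall>a b. \<forall>x\<in>?C. ?sm (a + b) x = ?add (?sm a x) (?sm b x)"
    by (insert assms(1), unfold dga_def Let_def, elim conjE, assumption)+
  let ?z = "?sm 0 x"
  have z: "?z \<in> ?C" using ax(2) assms(2) by blast
  obtain y where y: "y \<in> ?C" "?add ?z y = ?o" using ax(6) z by blast
  have "?o = ?add (?add ?z ?z) y"
    using ax(8)[rule_format, OF assms(2), of 0 0] y(2) by simp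
  also have "\<dots> = ?add ?z ?o" using ax(3) y z by simp
  also have "\<dots> = ?add ?o ?z" using ax(1,4) z by blast
  also have "\<dots> = ?z" using ax(5) z by blast
  finally have z0: "?z = ?o" ..
  have "?add x (?sm (-1) x) = ?add (?sm 1 x) (?sm (-1) x)"
    using ax(7) assms(2) by simp
  also have "\<dots> = ?sm (1 + -1) x"
    using ax(8)[rule_format, OF assms(2), of 1 "-1"] by simp
  finally have "?add x (?sm (-1) x) = ?z" by simp
  then show ?thesis using z0 by simp
qed

lemma dga_graded_facts:
  assumes "dga A"
  shows "\<forall>k. dg_hom A k \<subseteq> dg_carrier A \<and> dg_zero A \<in> dg_hom A k \<and>
      (\<forall>x\<in>dg_hom A k. \<forall>y\<in>dg_hom A k. dg_add A x y \<in> dg_hom A k) \<and>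
      (\<forall>a. \<forall>x\<in>dg_hom A k. dg_smult A a x \<in> dg_hom A k)"
    and "\<forall>k l. \<forall>x\<in>dg_hom A k. \<forall>y\<in>dg_hom A l. dg_mult A x y \<in> dg_hom A (k + l)"
    and "\<forall>k. \<forall>x\<in>dg_hom A k. dg_diff A x \<in> dg_hom A (k + 1)"
    and "\<forall>k. \<forall>x\<in>dg_hom A k. \<forall>y\<in>dg_carrier A.
        dg_diff A (dg_mult A x y) = dg_add A (dg_mult A (dg_diff A x) y)
          (dg_smult A (if even k then 1 else -1) (dg_mult A x (dg_diff A y)))"
  by (insert assms, unfold dga_def Let_def, elim conjE, assumption)+

lemma dga_restrict_decomposition:
  assumes A: "dga A" and S: "S \<subseteq> dg_carrier A"
    and components: "\<And>x c k. x \<in> S \<Longrightarrow> \<forall>k. c k \<in> dg_hom A k \<Longrightarrow>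
      finite {k. c k \<noteq> dg_zero A} \<Longrightarrow> x = dg_sum A c \<Longrightarrow> c k \<in> S"
    and x: "x \<in> S"
  shows "\<exists>!c. (\<forall>k. c k \<in> dg_hom A k \<inter> S) \<and> finite {k. c k \<noteq> dg_zero A} \<and> x = dg_sum A c"
proof -
  have "\<forall>x\<in>dg_carrier A.
      \<exists>!c. (\<forall>k. c k \<in> dg_hom A k) \<and> finite {k. c k \<noteq> dg_zero A} \<and> x = dg_sum A c"
    by (insert A, unfold dga_def Let_def, elim conjE, assumption)
  then obtain c where c: "(\<forall>k. c k \<in> dg_hom A k) \<and> finite {k. c k \<noteq> dg_zero A} \<and> x = dg_sum A c"
    and unique: "\<forall>c'. (\<forall>k. c' k \<in> dg_hom A k) \<and> finite {k. c' k \<noteq> dg_zero A} \<and> x = dg_sum A c' \<longrightarrow> c' = c"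
    using subsetD[OF S x] by (elim ballE ex1E) blast+
  show ?thesis
  proof (rule ex1I[of _ c])
    show "(\<forall>k. c k \<in> dg_hom A k \<inter> S) \<and> finite {k. c k \<noteq> dg_zero A} \<and> x = dg_sum A c"
      using c components[OF x] by blast
  qed (use unique in blast)
qed

lemma dga_restrict:
  assumes A: "dga A"
    and S: "S \<subseteq> dg_carrier A" "dg_zero A \<in> S" "dg_one A \<in> S"
      "\<And>x y. x \<in> S \<Longrightarrow> y \<in> S \<Longrightarrow> dg_add A x y \<in> S"
      "\<And>x y. x \<in> S \<Longrightarrow> y \<in> S \<Longrightarrow> dg_mult A x y \<in> S"
      "\<And>a x. x \<in> S \<Longrightarrow> dg_smult A a x \<in> S" "\<And>x. x \<in> S \<Longrightarrow> dg_diff A x \<in> S"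
    and components: "\<And>x c k. x \<in> S \<Longrightarrow> \<forall>k. c k \<in> dg_hom A k \<Longrightarrow>
      finite {k. c k \<noteq> dg_zero A} \<Longrightarrow> x = dg_sum A c \<Longrightarrow> c k \<in> S"
  shows "dga (A\<lparr>dg_carrier := S, dg_hom := (\<lambda>k. dg_hom A k \<inter> S)\<rparr>)"
proof -
  let ?B = "A\<lparr>dg_carrier := S, dg_hom := (\<lambda>k. dg_hom A k \<inter> S)\<rparr>"
  have sum: "dg_sum ?B = dg_sum A" by (simp add: dg_sum_def fun_eq_iff)
  have inverse: "\<exists>y\<in>S. dg_add A x y = dg_zero A" if "x \<in> S" for x
    using dga_add_smult_minus_one[OF A subsetD[OF S(1) that]] S(6)[OF that] by blast
  have decomposition: "\<exists>!c. (\<forall>k. c k \<in> dg_hom A k \<inter> S) \<and> finite {k. c k \<noteq> dg_zero A} \<and> x = dg_sum A c"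
    if "x \<in> S" for x
    by (rule dga_restrict_decomposition[OF A S(1) _ that]) (rule components)
  have fields: "dg_carrier ?B = S" "dg_hom ?B = (\<lambda>k. dg_hom A k \<inter> S)" "dg_add ?B = dg_add A"
    "dg_zero ?B = dg_zero A" "dg_smult ?B = dg_smult A" "dg_mult ?B = dg_mult A"
    "dg_one ?B = dg_one A" "dg_diff ?B = dg_diff A"
    by simp_all
  note ax = A[unfolded dga_def Let_def]
  show ?thesis
    unfolding dga_def Let_def sum fields
    apply (intro conjI)
    subgoal by (rule S(2))
    subgoal by (rule S(3))
    subgoal using S(4,5) by blast
    subgoal using S(6) by blast
    subgoal using S(7) by blast
    subgoal using ax S(1) by (elim conjE) (intro allI ballI conjI; meson subsetD)
    subgoal using ax S(1) by (elim conjE) (intro allI ballI conjI; meson subsetD)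
    subgoal using ax S(1) by (elim conjE) (intro allI ballI conjI; meson subsetD)
    subgoal using inverse by blast
    subgoal using ax S(1) by (elim conjE) (intro allI ballI conjI; meson subsetD)
    subgoal using ax S(1) by (elim conjE) (intro allI ballI conjI; meson subsetD)
    subgoal using ax S(1) by (elim conjE) (intro allI ballI conjI; meson subsetD)
    subgoal using ax S(1) by (elim conjE) (intro allI ballI conjI; meson subsetD)
    subgoal using ax S(1) by (elim conjE) (intro allI ballI conjI; meson subsetD)
    subgoal using ax S(1) by (elim conjE) (intro allI ballI conjI; meson subsetD)
    subgoal using ax S(1) by (elim conjE) (intro allI ballI conjI; meson subsetD)
    subgoal using ax S(1) by (elim conjE) (intro allI ballI conjI; meson subsetD)
    subgoal using dga_graded_facts(1)[OF A] S(2,4,6) by blast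
    subgoal using decomposition by blast
    subgoal using dga_graded_facts(2)[OF A] S(5) by blast
    subgoal using ax S(3) by (elim conjE) blast
    subgoal using ax S(1) by (elim conjE) (intro allI ballI conjI; meson subsetD)
    subgoal using ax S(1) by (elim conjE) (intro allI ballI conjI; meson subsetD)
    subgoal using dga_graded_facts(3)[OF A] S(7) by blast
    subgoal using ax S(1) by (elim conjE) (intro allI ballI conjI; meson subsetD)
    subgoal using dga_graded_facts(4)[OF A] S(1) by blast
    done
qed

lemma quasi_isomorphic_span:
  assumes "qiso_from C A" "qiso_from C B"
  shows "quasi_isomorphic A B"
  unfolding quasi_isomorphic_def
proof (intro exI[of _ "[C]"] conjI)
  show "let D = A # [C] @ [B] in \<forall>j\<le>length [C].
      if even j then qiso_from (D ! (j + 1)) (D ! j) else qiso_from (D ! j) (D ! (j + 1))"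
    using assms by (auto simp: Let_def le_Suc_eq)
qed simp

section \<open>The cohomology sub-dga and the transport of symbols\<close>

lemma fa_of_pol_one: "fa_of_pol n pol_one = fa_one"
proof -
  have "valid_monomial n (\<lambda>_. 0, None)" "ordered_word n (\<lambda>_. 0, None) = []"
    by (simp_all add: valid_monomial_def ordered_word_def x_word_zero xi_word_def)
  then show ?thesis
    by (simp add: pol_one_eq_pol_monom fa_of_pol_pol_monom fa_one_eq_fa_word)
qed

definition cohom_carrier :: "nat \<Rightarrow> (nat \<Rightarrow> nat \<Rightarrow> real) \<Rightarrow> (gen list \<Rightarrow> real) set set" where
  "cohom_carrier n \<theta> = {x \<in> dg_carrier (A_theta n \<theta>).
     \<exists>c v. v \<in> H1_reps n \<and> symbol \<theta> x = (\<lambda>m. c * pol_one m + v m)}"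

definition cohom_subdga :: "nat \<Rightarrow> (nat \<Rightarrow> nat \<Rightarrow> real) \<Rightarrow> (gen list \<Rightarrow> real) set dga" where
  "cohom_subdga n \<theta> = (A_theta n \<theta>)\<lparr>dg_carrier := cohom_carrier n \<theta>,
     dg_hom := (\<lambda>k. dg_hom (A_theta n \<theta>) k \<inter> cohom_carrier n \<theta>)\<rparr>"

definition transport :: "nat \<Rightarrow> (nat \<Rightarrow> nat \<Rightarrow> real) \<Rightarrow> (nat \<Rightarrow> nat \<Rightarrow> real) \<Rightarrow>
    (gen list \<Rightarrow> real) set \<Rightarrow> (gen list \<Rightarrow> real) set" where
  "transport n \<theta> \<theta>' x = A_cls n \<theta>' (fa_of_pol n (symbol \<theta> x))"

lemma cohom_carrierI:
  "x \<in> dg_carrier (A_theta n \<theta>) \<Longrightarrow> v \<in> H1_reps n \<Longrightarrow> symbol \<theta> x = (\<lambda>m. c * pol_one m + v m) \<Longrightarrow>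
   x \<in> cohom_carrier n \<theta>"
  unfolding cohom_carrier_def by blast

lemma cohom_carrierE:
  assumes "x \<in> cohom_carrier n \<theta>"
  obtains c v where "x \<in> dg_carrier (A_theta n \<theta>)" "v \<in> H1_reps n"
    "symbol \<theta> x = (\<lambda>m. c * pol_one m + v m)"
  using assms unfolding cohom_carrier_def by blast

context theta_algebra
begin

text \<open>Products of two 1-forms vanish, so on 1-forms an element of the cohomology sub-dga acts
  through its scalar part only.\<close>

lemma action_cohom_homog_1:
  assumes x: "x \<in> dg_carrier (A_theta n \<theta>)" and v: "v \<in> H1_reps n"
    and sx: "symbol \<theta> x = (\<lambda>m. c * pol_one m + v m)" and q: "homog 1 q"
  shows "action \<theta> x q = (\<lambda>m. c * q m)"
proof -
  let ?f = "fa_of_pol n (symbol \<theta> x)"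
  have "fa_symbol \<theta> ?f = fa_symbol \<theta> (A_rep x)"
    using fa_symbol_fa_of_pol[OF symbol_in_pols[OF x]] by (simp add: symbol_def)
  then have "action \<theta> x = fa_action \<theta> ?f"
    unfolding action_def
    using fa_action_eq_if_fa_symbol_eq A_rep_in_carrier[OF x] FA_fa_of_pol[OF symbol_in_pols[OF x]]
    by metis
  moreover have "?f = fa_add (fa_smult c fa_one) (fa_of_pol n v)"
    unfolding sx fa_of_pol_add fa_of_pol_smult fa_of_pol_one ..
  moreover have "homog (1 + 1) (fa_action \<theta> (fa_of_pol n v) q)"
    by (rule homog_fa_action[OF fa_homog_fa_of_pol[OF H1_reps_homog[OF v]] q])
  then have "fa_action \<theta> (fa_of_pol n v) q = (\<lambda>m. 0)"
    by (rule homog_eq_0_if_not_01) simp_all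
  ultimately show ?thesis
    using FA_fa_of_pol[OF H1_reps_pols[OF v]]
    by (simp add: fa_action_add fa_action_smult fa_action_one FA_finite_supp FA_smult FA_one)
qed

lemma symbol_mult_cohom:
  assumes x: "x \<in> dg_carrier (A_theta n \<theta>)" "v \<in> H1_reps n" "symbol \<theta> x = (\<lambda>m. c * pol_one m + v m)"
    and y: "y \<in> dg_carrier (A_theta n \<theta>)" "v' \<in> H1_reps n" "symbol \<theta> y = (\<lambda>m. c' * pol_one m + v' m)"
  shows "symbol \<theta> (dg_mult (A_theta n \<theta>) x y) = (\<lambda>m. (c * c') * pol_one m + (c' * v m + c * v' m))"
proof -
  have "symbol \<theta> (dg_mult (A_theta n \<theta>) x y) = (\<lambda>m. c' * action \<theta> x pol_one m + action \<theta> x v' m)"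
    using symbol_mult[OF x(1) y(1)] y(3)
    by (simp add: linear_op_add[OF linear_op_action] linear_op_smult[OF linear_op_action])
  then show ?thesis
    by (simp add: action_pol_one x(3) action_cohom_homog_1[OF x H1_reps_homog[OF y(2)]] algebra_simps)
qed

lemma cohom_carrier_subset: "cohom_carrier n \<theta> \<subseteq> dg_carrier (A_theta n \<theta>)"
  by (auto elim: cohom_carrierE)

lemma cohom_zero: "dg_zero (A_theta n \<theta>) \<in> cohom_carrier n \<theta>"
  by (rule cohom_carrierI[where v = "\<lambda>m. 0" and c = 0]) (simp_all add: symbol_ops H1_reps_zero)

lemma cohom_one: "dg_one (A_theta n \<theta>) \<in> cohom_carrier n \<theta>"
  by (rule cohom_carrierI[where v = "\<lambda>m. 0" and c = 1]) (simp_all add: symbol_ops H1_reps_zero)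

lemma cohom_add:
  assumes "x \<in> cohom_carrier n \<theta>" "y \<in> cohom_carrier n \<theta>"
  shows "dg_add (A_theta n \<theta>) x y \<in> cohom_carrier n \<theta>"
proof -
  obtain c v c' v' where "x \<in> dg_carrier (A_theta n \<theta>)" "v \<in> H1_reps n" "symbol \<theta> x = (\<lambda>m. c * pol_one m + v m)"
    "y \<in> dg_carrier (A_theta n \<theta>)" "v' \<in> H1_reps n" "symbol \<theta> y = (\<lambda>m. c' * pol_one m + v' m)"
    using assms by (elim cohom_carrierE)
  then show ?thesis
    by (intro cohom_carrierI[where v = "\<lambda>m. v m + v' m" and c = "c + c'"])
      (simp_all add: symbol_ops H1_reps_add fun_eq_iff algebra_simps)
qed

lemma cohom_smult:
  assumes "x \<in> cohom_carrier n \<theta>"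
  shows "dg_smult (A_theta n \<theta>) a x \<in> cohom_carrier n \<theta>"
proof -
  obtain c v where "x \<in> dg_carrier (A_theta n \<theta>)" "v \<in> H1_reps n" "symbol \<theta> x = (\<lambda>m. c * pol_one m + v m)"
    using assms by (elim cohom_carrierE)
  then show ?thesis
    by (intro cohom_carrierI[where v = "\<lambda>m. a * v m" and c = "a * c"])
      (simp_all add: symbol_ops H1_reps_smult fun_eq_iff algebra_simps)
qed

lemma cohom_mult:
  assumes "x \<in> cohom_carrier n \<theta>" "y \<in> cohom_carrier n \<theta>"
  shows "dg_mult (A_theta n \<theta>) x y \<in> cohom_carrier n \<theta>"
proof -
  obtain c v c' v' where x: "x \<in> dg_carrier (A_theta n \<theta>)" "v \<in> H1_reps n" "symbol \<theta> x = (\<lambda>m. c * pol_one m + v m)"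
    and y: "y \<in> dg_carrier (A_theta n \<theta>)" "v' \<in> H1_reps n" "symbol \<theta> y = (\<lambda>m. c' * pol_one m + v' m)"
    using assms by (elim cohom_carrierE)
  show ?thesis
    by (rule cohom_carrierI[OF _ _ symbol_mult_cohom[OF x y]])
      (simp_all add: x y symbol_ops H1_reps_add H1_reps_smult)
qed

lemma cohom_diff:
  assumes "x \<in> cohom_carrier n \<theta>"
  shows "dg_diff (A_theta n \<theta>) x = dg_zero (A_theta n \<theta>)"
proof -
  obtain c v where "x \<in> dg_carrier (A_theta n \<theta>)" "v \<in> H1_reps n" "symbol \<theta> x = (\<lambda>m. c * pol_one m + v m)"
    using assms by (elim cohom_carrierE)
  then show ?thesis
    by (intro symbol_inj) (simp_all add: symbol_ops linear_op_add[OF linear_op_pol_d]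
        linear_op_smult[OF linear_op_pol_d] pol_d_pol_one pol_d_homog_1 H1_reps_homog)
qed

lemma cohom_components:
  assumes x: "x \<in> cohom_carrier n \<theta>" and c: "\<forall>k. c k \<in> dg_hom (A_theta n \<theta>) k"
    "finite {k. c k \<noteq> dg_zero (A_theta n \<theta>)}" "x = dg_sum (A_theta n \<theta>) c"
  shows "c k \<in> cohom_carrier n \<theta>"
proof -
  obtain a v where v: "v \<in> H1_reps n" and sx: "symbol \<theta> x = (\<lambda>m. a * pol_one m + v m)"
    using x by (elim cohom_carrierE)
  have "symbol \<theta> (c k) = (\<lambda>m. (if k = 0 then a else 0) * pol_one m + (if k = 1 then v m else 0))"
    using symbol_homogeneous_component[OF c] deg_part_const_plus_H1[OF v] sx by simp
  moreover have "(\<lambda>m. if k = 1 then v m else 0) \<in> H1_reps n"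
    by (cases "k = 1") (simp_all add: v H1_reps_zero)
  ultimately show ?thesis
    using c(1) hom_iff by (blast intro: cohom_carrierI)
qed

theorem dga_cohom_subdga: "dga (cohom_subdga n \<theta>)"
  unfolding cohom_subdga_def
  by (rule dga_restrict[OF dga_A_theta cohom_carrier_subset cohom_zero cohom_one])
    (simp_all add: cohom_add cohom_mult cohom_smult cohom_diff cohom_zero cohom_components)

end

locale theta_pair = src: theta_algebra n \<theta> + tgt: theta_algebra n \<theta>'
  for n :: nat and \<theta> \<theta>' :: "nat \<Rightarrow> nat \<Rightarrow> real"
begin

lemma symbol_transport:
  assumes "x \<in> dg_carrier (A_theta n \<theta>)"
  shows "transport n \<theta> \<theta>' x \<in> dg_carrier (A_theta n \<theta>')" "symbol \<theta>' (transport n \<theta> \<theta>' x) = symbol \<theta> x"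
  using src.symbol_in_pols[OF assms]
  by (simp_all add: transport_def tgt.A_cls_in_carrier FA_fa_of_pol tgt.symbol_A_cls fa_symbol_fa_of_pol)

lemma transport_eqI:
  assumes "x \<in> dg_carrier (A_theta n \<theta>)" "y \<in> dg_carrier (A_theta n \<theta>')" "symbol \<theta>' y = symbol \<theta> x"
  shows "transport n \<theta> \<theta>' x = y"
  using assms symbol_transport[OF assms(1)] by (intro tgt.symbol_inj) simp_all

lemma transport_mult:
  assumes x: "x \<in> cohom_carrier n \<theta>" and y: "y \<in> cohom_carrier n \<theta>"
  shows "transport n \<theta> \<theta>' (dg_mult (A_theta n \<theta>) x y)
    = dg_mult (A_theta n \<theta>') (transport n \<theta> \<theta>' x) (transport n \<theta> \<theta>' y)"
proof -
  obtain c v c' v' where x': "x \<in> dg_carrier (A_theta n \<theta>)" "v \<in> H1_reps n"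
      "symbol \<theta> x = (\<lambda>m. c * pol_one m + v m)"
    and y': "y \<in> dg_carrier (A_theta n \<theta>)" "v' \<in> H1_reps n"
      "symbol \<theta> y = (\<lambda>m. c' * pol_one m + v' m)"
    using x y by (elim cohom_carrierE)
  have tx: "transport n \<theta> \<theta>' x \<in> dg_carrier (A_theta n \<theta>')" "v \<in> H1_reps n"
      "symbol \<theta>' (transport n \<theta> \<theta>' x) = (\<lambda>m. c * pol_one m + v m)"
    and ty: "transport n \<theta> \<theta>' y \<in> dg_carrier (A_theta n \<theta>')" "v' \<in> H1_reps n"
      "symbol \<theta>' (transport n \<theta> \<theta>' y) = (\<lambda>m. c' * pol_one m + v' m)"
    using symbol_transport[OF x'(1)] symbol_transport[OF y'(1)] x' y' by simp_all
  show ?thesis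
    using src.symbol_mult[OF x'(1) y'(1)] tgt.symbol_mult[OF tx(1) ty(1)]
    by (intro transport_eqI) (simp_all add: src.symbol_mult_cohom[OF x' y'] tgt.symbol_mult_cohom[OF tx ty])
qed

lemma dga_morphism_transport: "dga_morphism (cohom_subdga n \<theta>) (A_theta n \<theta>') (transport n \<theta> \<theta>')"
proof -
  have carrier: "x \<in> cohom_carrier n \<theta> \<Longrightarrow> x \<in> dg_carrier (A_theta n \<theta>)" for x
    using src.cohom_carrier_subset by blast
  note transport = symbol_transport[OF carrier]
  show ?thesis
    unfolding dga_morphism_def
  proof (simp add: cohom_subdga_def src.dga_cohom_subdga[unfolded cohom_subdga_def] tgt.dga_A_theta
      transport, intro conjI ballI allI)
    fix x y assume "x \<in> cohom_carrier n \<theta>" "y \<in> cohom_carrier n \<theta>"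
    then show "transport n \<theta> \<theta>' (dg_mult (A_theta n \<theta>) x y)
        = dg_mult (A_theta n \<theta>') (transport n \<theta> \<theta>' x) (transport n \<theta> \<theta>' y)"
      by (rule transport_mult)
  next
    fix x y assume x: "x \<in> cohom_carrier n \<theta>" and y: "y \<in> cohom_carrier n \<theta>"
    show "transport n \<theta> \<theta>' (dg_add (A_theta n \<theta>) x y)
        = dg_add (A_theta n \<theta>') (transport n \<theta> \<theta>' x) (transport n \<theta> \<theta>' y)"
      using carrier[OF x] carrier[OF y] transport[OF x] transport[OF y]
      by (intro transport_eqI) (simp_all add: src.symbol_ops tgt.symbol_ops)
  next
    fix a x assume x: "x \<in> cohom_carrier n \<theta>"
    show "transport n \<theta> \<theta>' (dg_smult (A_theta n \<theta>) a x) = dg_smult (A_theta n \<theta>') a (transport n \<theta> \<theta>' x)"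
      using carrier[OF x] transport[OF x]
      by (intro transport_eqI) (simp_all add: src.symbol_ops tgt.symbol_ops)
  next
    fix x assume x: "x \<in> cohom_carrier n \<theta>"
    show "transport n \<theta> \<theta>' (dg_diff (A_theta n \<theta>) x) = dg_diff (A_theta n \<theta>') (transport n \<theta> \<theta>' x)"
      using carrier[OF x] transport[OF x]
      by (intro transport_eqI) (simp_all add: src.symbol_ops tgt.symbol_ops)
  next
    fix k x assume "x \<in> dg_hom (A_theta n \<theta>) k \<inter> cohom_carrier n \<theta>"
    then show "transport n \<theta> \<theta>' x \<in> dg_hom (A_theta n \<theta>') k"
      using transport by (simp add: src.hom_iff tgt.hom_iff)
  next
    show "transport n \<theta> \<theta>' (dg_one (A_theta n \<theta>)) = dg_one (A_theta n \<theta>')"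
      by (intro transport_eqI) (simp_all add: src.symbol_ops tgt.symbol_ops)
  qed
qed

lemma transport_surjective_on_cohomology:
  assumes z': "z' \<in> dg_hom (A_theta n \<theta>') k" and closed: "dg_diff (A_theta n \<theta>') z' = dg_zero (A_theta n \<theta>')"
  shows "\<exists>z\<in>dg_hom (A_theta n \<theta>) k \<inter> cohom_carrier n \<theta>. dg_diff (A_theta n \<theta>) z = dg_zero (A_theta n \<theta>) \<and>
    (\<exists>b\<in>dg_hom (A_theta n \<theta>') (k - 1).
      dg_add (A_theta n \<theta>') (transport n \<theta> \<theta>' z) (dg_diff (A_theta n \<theta>') b) = z')"
proof -
  have z'C: "z' \<in> dg_carrier (A_theta n \<theta>')" and homog: "homog k (symbol \<theta>' z')"
    using z' tgt.hom_iff by blast+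
  have "pol_d (symbol \<theta>' z') = (\<lambda>m. 0)"
    using closed tgt.symbol_diff[OF z'C] tgt.symbol_zero by simp
  then obtain F c v where F: "F \<in> pols n" "homog (k - 1) F" and v: "v \<in> H1_reps n"
    and homog_cv: "homog k (\<lambda>m. c * pol_one m + v m)"
    and decomp: "symbol \<theta>' z' = (\<lambda>m. pol_d F m + (c * pol_one m + v m))"
    using closed_pol_decomposition[OF tgt.symbol_in_pols[OF z'C] homog] by blast
  let ?z = "A_cls n \<theta> (fa_of_pol n (\<lambda>m. c * pol_one m + v m))"
  let ?b = "A_cls n \<theta>' (fa_of_pol n F)"
  have cv: "(\<lambda>m. c * pol_one m + v m) \<in> pols n"
    by (intro pols_add pols_smult pols_pol_one H1_reps_pols v)
  have z: "?z \<in> dg_carrier (A_theta n \<theta>)" "symbol \<theta> ?z = (\<lambda>m. c * pol_one m + v m)"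
    using src.A_cls_fa_of_pol[OF cv] by simp_all
  have b: "?b \<in> dg_carrier (A_theta n \<theta>')" "symbol \<theta>' ?b = F"
    using tgt.A_cls_fa_of_pol[OF F(1)] by simp_all
  have "?z \<in> dg_hom (A_theta n \<theta>) k \<inter> cohom_carrier n \<theta>"
    using z homog_cv v by (simp add: src.hom_iff cohom_carrierI)
  moreover have "?b \<in> dg_hom (A_theta n \<theta>') (k - 1)"
    using b F(2) by (simp add: tgt.hom_iff)
  moreover have "dg_add (A_theta n \<theta>') (transport n \<theta> \<theta>' ?z) (dg_diff (A_theta n \<theta>') ?b) = z'"
    using symbol_transport[OF z(1)] z(2) tgt.symbol_diff[OF b(1)] b(2) z'C decomp
    by (intro tgt.symbol_inj) (simp_all add: tgt.symbol_ops add.commute)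
  ultimately show ?thesis
    using src.cohom_diff by blast
qed

lemma transport_injective_on_cohomology:
  assumes z: "z \<in> dg_hom (A_theta n \<theta>) k \<inter> cohom_carrier n \<theta>" and b: "b \<in> dg_hom (A_theta n \<theta>') (k - 1)"
    and exact: "transport n \<theta> \<theta>' z = dg_diff (A_theta n \<theta>') b"
  shows "\<exists>a\<in>dg_hom (A_theta n \<theta>) (k - 1) \<inter> cohom_carrier n \<theta>. z = dg_diff (A_theta n \<theta>) a"
proof -
  obtain c v where zC: "z \<in> dg_carrier (A_theta n \<theta>)" and v: "v \<in> H1_reps n"
    and sz: "symbol \<theta> z = (\<lambda>m. c * pol_one m + v m)"
    using z by (blast elim: cohom_carrierE)
  have bC: "b \<in> dg_carrier (A_theta n \<theta>')" using b tgt.hom_iff by blast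
  have "(\<lambda>m. c * pol_one m + v m) = pol_d (symbol \<theta>' b)"
    using symbol_transport[OF zC] tgt.symbol_diff[OF bC] exact sz by simp
  then have "c = 0" "v = (\<lambda>m. 0)" using exact_const_plus_H1_eq_0[OF v] by blast+
  then have "z = dg_zero (A_theta n \<theta>)"
    using sz src.symbol_zero by (intro src.symbol_inj[OF zC]) simp_all
  moreover have "dg_zero (A_theta n \<theta>) \<in> dg_hom (A_theta n \<theta>) (k - 1)"
    using src.symbol_zero by (simp add: src.hom_iff homog_zero)
  ultimately show ?thesis
    using src.cohom_zero src.cohom_diff[OF src.cohom_zero] by auto
qed

lemma quasi_isomorphism_transport:
  "quasi_isomorphism (cohom_subdga n \<theta>) (A_theta n \<theta>') (transport n \<theta> \<theta>')"
  unfolding quasi_isomorphism_def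
proof (intro conjI allI ballI impI)
  show "dga_morphism (cohom_subdga n \<theta>) (A_theta n \<theta>') (transport n \<theta> \<theta>')"
    by (rule dga_morphism_transport)
  fix k
  fix z' assume "z' \<in> dg_hom (A_theta n \<theta>') k" "dg_diff (A_theta n \<theta>') z' = dg_zero (A_theta n \<theta>')"
  then show "\<exists>z\<in>dg_hom (cohom_subdga n \<theta>) k. dg_diff (cohom_subdga n \<theta>) z = dg_zero (cohom_subdga n \<theta>) \<and>
      (\<exists>b\<in>dg_hom (A_theta n \<theta>') (k - 1).
        dg_add (A_theta n \<theta>') (transport n \<theta> \<theta>' z) (dg_diff (A_theta n \<theta>') b) = z')"
    unfolding cohom_subdga_def by (simp add: transport_surjective_on_cohomology)
next
  fix k z assume z: "z \<in> dg_hom (cohom_subdga n \<theta>) k"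
    and "dg_diff (cohom_subdga n \<theta>) z = dg_zero (cohom_subdga n \<theta>) \<and>
      (\<exists>b\<in>dg_hom (A_theta n \<theta>') (k - 1). transport n \<theta> \<theta>' z = dg_diff (A_theta n \<theta>') b)"
  then obtain b where "b \<in> dg_hom (A_theta n \<theta>') (k - 1)" "transport n \<theta> \<theta>' z = dg_diff (A_theta n \<theta>') b"
    by blast
  then show "\<exists>a\<in>dg_hom (cohom_subdga n \<theta>) (k - 1). z = dg_diff (cohom_subdga n \<theta>) a"
    using transport_injective_on_cohomology z unfolding cohom_subdga_def by simp
qed

end

theorem proposition1:
  fixes n :: nat and \<theta> \<theta>' :: "nat \<Rightarrow> nat \<Rightarrow> real"
  assumes "n \<ge> 1"
    and "antisymmetric_matrix n \<theta>"
    and "antisymmetric_matrix n \<theta>'"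
  shows "quasi_isomorphic (A_theta n \<theta>) (A_theta n \<theta>')"
proof -
  \<comment> \<open>For theta' = theta the transport is the inclusion of the sub-dga.\<close>
  have "theta_pair n \<theta> \<theta>" "theta_pair n \<theta> \<theta>'"
    using assms(2,3) by (simp_all add: theta_pair_def theta_algebra_def)
  then have "qiso_from (cohom_subdga n \<theta>) (A_theta n \<theta>)" "qiso_from (cohom_subdga n \<theta>) (A_theta n \<theta>')"
    unfolding qiso_from_def by (blast intro: theta_pair.quasi_isomorphism_transport)+
  then show ?thesis by (rule quasi_isomorphic_span)
qed

end
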